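(* Let $1<p<\infty$, let $w,\sigma$ be weights, and let $\mathbb S$ be a positive generalized Haar shift. Let $\mathfrak S_p$ be the smallest constant with $\|1_Q\mathbb S(1_Q\sigma)\|_{L^p(w)}\le\mathfrak S_p\sigma(Q)^{1/p}$ for all dyadic cubes $Q$, and let $\mathfrak N_p$ be the smallest constant such that for every linearization $\mathbb L$ of $\mathbb S_\natural$, every dyadic cube $Q_0$ and every bounded $g$, \[ \Big(\int_{Q_0}\sup_{Q\in\mathscr D,\,Q\subseteq Q_0}1_Q\Big[\frac1{w(Q)}\int_Q|\mathbb L^*(1_Qgw)|\,\sigma\Big]^pw\Big)^{1/p}\le\mathfrak N_p\,\sigma(Q_0)^{1/p}\|g\|_\infty. \] Then $\mathfrak N_p\le C\mathfrak S_p$, with $C$ depending only on $p$.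
   Context: $\mathscr D$: standard dyadic cubes of $\mathbb{R}^d$; $\ell(Q)$ side length. A generalized Haar shift $\mathbb Sf=\sum_{Q\in\mathscr D}\mathbb S_Qf$ has components $\mathbb S_Qf(x)=|Q|^{-1}\int_Qs_Q(x,y)f(y)\,dy$, where $s_Q$ is supported on $Q\times Q$, $\|s_Q\|_\infty\le1$, arising from the standard definition ($\mathbb S_Qf=\sum_{Q',R'}|Q|^{-1}\langle f,h^{Q'}_{R'}\rangle k^{R'}_{Q'}$ over dyadic $Q',R'\subseteq Q$ of side lengths $2^{-m}\ell(Q),2^{-n}\ell(Q)$, with $h^{Q'}_{R'}$, $k^{R'}_{Q'}$ linear combinations of indicators of the dyadic children of $R'$, resp. $Q'$, of sup norm $\le1$, and $\|\mathbb S\|_{L^2\to L^2}\le1$). Positive means $s_Q\ge0$ for all $Q$. Adjoint: $\mathbb S^*g(y)=\sum_Q|Q|^{-1}\int_Qs_Q(x,y)g(x)\,dx$. A linearization of $\mathbb S_\natural$ is $\mathbb Lf(x)=e^{i\vartheta(x)}\sum_{Q\in\mathscr D:\epsilon(x)\le\ell(Q)\le\upsilon(x)}\mathbb S_Qf(x)$ with measurable $\vartheta$ real-valued and $0<\epsilon(x)<\upsilon(x)$; $\mathbb L^*$ is its formal adjoint. Weights are nonnegative locally integrable functions, $w(E)=\int_Ew$ (the ratio is taken as $0$ if $w(Q)=0$). *)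

theory Defs
  imports "HOL-Analysis.Analysis"
begin

type_synonym pt = "nat \<Rightarrow> real"

text \<open>Euclidean space R^d, realised as extensional functions on {..<d} with Lebesgue
  (product Borel) measure.\<close>
definition RdM :: "nat \<Rightarrow> pt measure" where
  "RdM d = PiM {..<d} (\<lambda>_. lborel)"

definition dcube :: "nat \<Rightarrow> int \<Rightarrow> (nat \<Rightarrow> int) \<Rightarrow> pt set" where
  "dcube d k j = {x \<in> space (RdM d). \<forall>i<d.
      of_int (j i) * 2 powr (- of_int k) \<le> x i \<and> x i < (of_int (j i) + 1) * 2 powr (- of_int k)}"

definition dyadic :: "nat \<Rightarrow> pt set set" where
  "dyadic d = {dcube d k j | k j. True}"

definition vol :: "nat \<Rightarrow> pt set \<Rightarrow> real" where
  "vol d Q = measure (RdM d) Q"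

definition dlen :: "nat \<Rightarrow> pt set \<Rightarrow> real" where
  "dlen d Q = vol d Q powr (1 / real d)"

definition dchildren :: "nat \<Rightarrow> pt set \<Rightarrow> pt set set" where
  "dchildren d Q = {Q' \<in> dyadic d. Q' \<subseteq> Q \<and> dlen d Q' = dlen d Q / 2}"

definition shift_pairs :: "nat \<Rightarrow> nat \<Rightarrow> nat \<Rightarrow> pt set \<Rightarrow> (pt set \<times> pt set) set" where
  "shift_pairs d m n Q = {(Q', R'). Q' \<in> dyadic d \<and> Q' \<subseteq> Q \<and> dlen d Q' = dlen d Q / 2 ^ m
      \<and> R' \<in> dyadic d \<and> R' \<subseteq> Q \<and> dlen d R' = dlen d Q / 2 ^ n}"

definition child_comb :: "nat \<Rightarrow> pt set \<Rightarrow> (pt \<Rightarrow> real) \<Rightarrow> bool" where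
  "child_comb d R f \<longleftrightarrow> (\<exists>c. \<forall>y. f y = (\<Sum>R''\<in>dchildren d R. c R'' * indicator R'' y))
      \<and> (\<forall>y. \<bar>f y\<bar> \<le> 1)"

text \<open>Shift data: h Q Q' R' (= h^{Q'}_{R'}) and k Q Q' R' (= k^{R'}_{Q'}).  Kernel s_Q.\<close>
definition skernel :: "nat \<Rightarrow> nat \<Rightarrow> nat
    \<Rightarrow> (pt set \<Rightarrow> pt set \<Rightarrow> pt set \<Rightarrow> pt \<Rightarrow> real)
    \<Rightarrow> (pt set \<Rightarrow> pt set \<Rightarrow> pt set \<Rightarrow> pt \<Rightarrow> real)
    \<Rightarrow> pt set \<Rightarrow> pt \<Rightarrow> pt \<Rightarrow> real" where
  "skernel d m n h k Q x y = (\<Sum>(Q', R')\<in>shift_pairs d m n Q. h Q Q' R' y * k Q Q' R' x)"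

definition scomp :: "nat \<Rightarrow> (pt set \<Rightarrow> pt \<Rightarrow> pt \<Rightarrow> real) \<Rightarrow> pt set \<Rightarrow> (pt \<Rightarrow> real) \<Rightarrow> pt \<Rightarrow> real" where
  "scomp d s Q f x = (1 / vol d Q) * (LINT y:Q|RdM d. s Q x y * f y)"

definition strunc :: "nat \<Rightarrow> (pt set \<Rightarrow> pt \<Rightarrow> pt \<Rightarrow> real) \<Rightarrow> nat \<Rightarrow> (pt \<Rightarrow> real) \<Rightarrow> pt \<Rightarrow> real" where
  "strunc d s N f x = (\<Sum>Q\<in>{Q\<in>dyadic d. x \<in> Q \<and> 2 powr (- real N) \<le> dlen d Q \<and> dlen d Q \<le> 2 powr (real N)}.
      scomp d s Q f x)"

definition L2fun :: "nat \<Rightarrow> (pt \<Rightarrow> real) \<Rightarrow> bool" where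
  "L2fun d f \<longleftrightarrow> f \<in> borel_measurable (RdM d) \<and> integrable (RdM d) (\<lambda>x. (f x)\<^sup>2)"

text \<open>||S||_{L^2 -> L^2} <= 1: for f in L^2, S f = sum_Q S_Q f converges in L^2
  (as limit of the scale truncations) and ||S f||_2 <= ||f||_2.\<close>
definition L2_norm_le_1 :: "nat \<Rightarrow> (pt set \<Rightarrow> pt \<Rightarrow> pt \<Rightarrow> real) \<Rightarrow> bool" where
  "L2_norm_le_1 d s \<longleftrightarrow> (\<forall>f. L2fun d f \<longrightarrow> (\<exists>F. L2fun d F
      \<and> (\<integral>x. (F x)\<^sup>2 \<partial>RdM d) \<le> (\<integral>x. (f x)\<^sup>2 \<partial>RdM d)
      \<and> (\<lambda>N. \<integral>x. (strunc d s N f x - F x)\<^sup>2 \<partial>RdM d) \<longlonglongrightarrow> 0))"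

definition pos_haar_shift :: "nat \<Rightarrow> nat \<Rightarrow> nat
    \<Rightarrow> (pt set \<Rightarrow> pt set \<Rightarrow> pt set \<Rightarrow> pt \<Rightarrow> real)
    \<Rightarrow> (pt set \<Rightarrow> pt set \<Rightarrow> pt set \<Rightarrow> pt \<Rightarrow> real) \<Rightarrow> bool" where
  "pos_haar_shift d m n h k \<longleftrightarrow>
     (\<forall>Q\<in>dyadic d. \<forall>(Q', R')\<in>shift_pairs d m n Q.
        child_comb d R' (h Q Q' R') \<and> child_comb d Q' (k Q Q' R'))
   \<and> L2_norm_le_1 d (skernel d m n h k)
   \<and> (\<forall>Q\<in>dyadic d. \<forall>x y. 0 \<le> skernel d m n h k Q x y)"

definition weight :: "nat \<Rightarrow> (pt \<Rightarrow> real) \<Rightarrow> bool" where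
  "weight d w \<longleftrightarrow> w \<in> borel_measurable (RdM d) \<and> (\<forall>x\<in>space (RdM d). 0 \<le> w x)
     \<and> (\<forall>Q\<in>dyadic d. set_integrable (RdM d) Q w)"

definition wmeas :: "nat \<Rightarrow> (pt \<Rightarrow> real) \<Rightarrow> pt set \<Rightarrow> ennreal" where
  "wmeas d w E = (\<integral>\<^sup>+ x\<in>E. ennreal (w x) \<partial>RdM d)"

text \<open>Real powers on [0,\<infinity>], for positive exponents.\<close>
definition epowr :: "ennreal \<Rightarrow> real \<Rightarrow> ennreal" where
  "epowr x a = (if x = \<infinity> then \<infinity> else ennreal (enn2real x powr a))"

text \<open>S(f sigma) for f >= 0 (positive shift: all terms nonnegative, sum in [0,\<infinity>]).\<close>
definition Spos :: "nat \<Rightarrow> (pt set \<Rightarrow> pt \<Rightarrow> pt \<Rightarrow> real) \<Rightarrow> (pt \<Rightarrow> real) \<Rightarrow> pt \<Rightarrow> ennreal" where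
  "Spos d s f x = (\<Sum>\<^sub>\<infinity>Q\<in>dyadic d.
      (\<integral>\<^sup>+ y\<in>Q. ennreal (s Q x y * f y) \<partial>RdM d) / ennreal (vol d Q))"

definition test_const :: "nat \<Rightarrow> real \<Rightarrow> (pt \<Rightarrow> real) \<Rightarrow> (pt \<Rightarrow> real)
    \<Rightarrow> (pt set \<Rightarrow> pt \<Rightarrow> pt \<Rightarrow> real) \<Rightarrow> ennreal" where
  "test_const d p w \<sigma> s = Inf {A. \<forall>Q\<in>dyadic d.
      epowr (\<integral>\<^sup>+ x\<in>Q. epowr (Spos d s (\<lambda>y. indicator Q y * \<sigma> y) x) p * ennreal (w x) \<partial>RdM d) (1 / p)
        \<le> A * epowr (wmeas d \<sigma> Q) (1 / p)}"

text \<open>Formal adjoint of the linearization L f(x) = e^{i theta(x)} sum_{eps(x)<=l(Q)<=ups(x)} S_Q f(x):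
  L^* g(y) = sum_Q |Q|^-1 int_Q s_Q(x,y) 1[eps(x)<=l(Q)<=ups(x)] e^{-i theta(x)} g(x) dx.\<close>
definition Lstar :: "nat \<Rightarrow> (pt set \<Rightarrow> pt \<Rightarrow> pt \<Rightarrow> real) \<Rightarrow> (pt \<Rightarrow> real) \<Rightarrow> (pt \<Rightarrow> real)
    \<Rightarrow> (pt \<Rightarrow> real) \<Rightarrow> (pt \<Rightarrow> complex) \<Rightarrow> pt \<Rightarrow> complex" where
  "Lstar d s \<theta> \<epsilon> \<upsilon> g y = (\<Sum>\<^sub>\<infinity>Q\<in>dyadic d.
      complex_of_real (1 / vol d Q) * (LINT x:Q|RdM d.
         complex_of_real (s Q x y * indicator {z. \<epsilon> z \<le> dlen d Q \<and> dlen d Q \<le> \<upsilon> z} x)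
         * exp (- \<i> * complex_of_real (\<theta> x)) * g x))"

definition linearization_params :: "nat \<Rightarrow> (pt \<Rightarrow> real) \<Rightarrow> (pt \<Rightarrow> real) \<Rightarrow> (pt \<Rightarrow> real) \<Rightarrow> bool" where
  "linearization_params d \<theta> \<epsilon> \<upsilon> \<longleftrightarrow> \<theta> \<in> borel_measurable (RdM d) \<and> \<epsilon> \<in> borel_measurable (RdM d)
     \<and> \<upsilon> \<in> borel_measurable (RdM d) \<and> (\<forall>x\<in>space (RdM d). 0 < \<epsilon> x \<and> \<epsilon> x < \<upsilon> x)"

definition Lmax :: "nat \<Rightarrow> (pt \<Rightarrow> real) \<Rightarrow> (pt \<Rightarrow> real) \<Rightarrow> (pt set \<Rightarrow> pt \<Rightarrow> pt \<Rightarrow> real)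
    \<Rightarrow> (pt \<Rightarrow> real) \<Rightarrow> (pt \<Rightarrow> real) \<Rightarrow> (pt \<Rightarrow> real) \<Rightarrow> (pt \<Rightarrow> complex) \<Rightarrow> pt set \<Rightarrow> pt \<Rightarrow> ennreal" where
  "Lmax d w \<sigma> s \<theta> \<epsilon> \<upsilon> g Q0 x = (SUP Q\<in>{Q\<in>dyadic d. Q \<subseteq> Q0}.
      indicator Q x * (if wmeas d w Q = 0 then 0 else
        (\<integral>\<^sup>+ y\<in>Q. ennreal (cmod (Lstar d s \<theta> \<epsilon> \<upsilon> (\<lambda>z. indicator Q z * g z * complex_of_real (w z)) y))
                    * ennreal (\<sigma> y) \<partial>RdM d) / wmeas d w Q))"

definition max_const :: "nat \<Rightarrow> real \<Rightarrow> (pt \<Rightarrow> real) \<Rightarrow> (pt \<Rightarrow> real)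
    \<Rightarrow> (pt set \<Rightarrow> pt \<Rightarrow> pt \<Rightarrow> real) \<Rightarrow> ennreal" where
  "max_const d p w \<sigma> s = Inf {A. \<forall>\<theta> \<epsilon> \<upsilon> g Q0.
      linearization_params d \<theta> \<epsilon> \<upsilon> \<and> Q0 \<in> dyadic d
      \<and> g \<in> borel_measurable (RdM d) \<and> bounded (g ` space (RdM d)) \<longrightarrow>
      epowr (\<integral>\<^sup>+ x\<in>Q0. epowr (Lmax d w \<sigma> s \<theta> \<epsilon> \<upsilon> g Q0 x) p * ennreal (w x) \<partial>RdM d) (1 / p)
        \<le> A * epowr (wmeas d \<sigma> Q0) (1 / p) * ennreal (SUP z\<in>space (RdM d). cmod (g z))}"

end

theory Submission
  imports Defs
begin

(* Fix a linearisation, a cube Q0 and a bounded g with |g| <= G.  Because s_Q >= 0 and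
   |e^{i theta}| = 1, the adjoint is dominated pointwise by the (untruncated) adjoint S*:
   |L*(1_Q g w)| <= G S*(1_Q w).  By Tonelli, S* is the formal adjoint of S on nonnegative
   functions, hence for every dyadic Q inside Q0
       int_Q |L*(1_Q g w)| sigma <= G int_Q S(1_Q sigma) w <= G int_Q S(1_Q0 sigma) w.
   Dividing by w(Q), the maximal function of the theorem is at most G times the w-weighted
   dyadic maximal function of F = S(1_Q0 sigma) over the cubes inside Q0.  Doob's inequality
   in L^p(w) for that maximal function and the testing condition on Q0 finish the proof,
   with constant C = (2 (2p')^p / p)^{1/p}, p' = p/(p-1). *)

section \<open>Dyadic cubes\<close>

lemma space_RdM: "space (RdM d) = PiE {..<d} (\<lambda>_. UNIV)"
  by (simp add: RdM_def space_PiM)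

lemma mem_dcube:
  "x \<in> dcube d k j \<longleftrightarrow> x \<in> space (RdM d) \<and> (\<forall>i<d. \<lfloor>x i * 2 powr real_of_int k\<rfloor> = j i)"
proof -
  have t: "0 < (2::real) powr real_of_int k" by simp
  have m: "(2::real) powr (- real_of_int k) = 1 / 2 powr real_of_int k"
    by (simp add: powr_minus_divide)
  have "\<And>i. (of_int (j i) * 2 powr (- of_int k) \<le> x i \<and> x i < (of_int (j i) + 1) * 2 powr (- of_int k))
     \<longleftrightarrow> \<lfloor>x i * 2 powr real_of_int k\<rfloor> = j i"
    unfolding m floor_eq_iff using t
    by (simp add: divide_le_eq pos_less_divide_eq pos_divide_le_eq mult.commute)
  then show ?thesis unfolding dcube_def by auto
qed

lemma floor_scale_coarsen:
  fixes y z :: real and k k' :: int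
  assumes "k \<le> k'" "\<lfloor>y * 2 powr real_of_int k'\<rfloor> = \<lfloor>z * 2 powr real_of_int k'\<rfloor>"
  shows "\<lfloor>y * 2 powr real_of_int k\<rfloor> = \<lfloor>z * 2 powr real_of_int k\<rfloor>"
proof -
  define n where "n = nat (k' - k)"
  have kk: "real_of_int k' = real_of_int k + real n" using assms(1) by (simp add: n_def)
  have e: "\<And>u::real. u * 2 powr real_of_int k = (u * 2 powr real_of_int k') / real_of_int (2 ^ n)"
    unfolding kk by (simp add: powr_add powr_realpow)
  have f: "\<And>u. \<lfloor>u / real_of_int (2^n)\<rfloor> = \<lfloor>u\<rfloor> div 2^n"
    by (rule floor_divide_real_eq_div) simp
  show ?thesis unfolding e f using assms(2) by simp
qed

lemma dcube_nest:
  assumes "k \<le> k'" "x \<in> dcube d k j" "x \<in> dcube d k' j'"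
  shows "dcube d k' j' \<subseteq> dcube d k j"
proof
  fix y assume y: "y \<in> dcube d k' j'"
  show "y \<in> dcube d k j" unfolding mem_dcube
  proof (intro conjI allI impI)
    show "y \<in> space (RdM d)" using y by (simp add: mem_dcube)
    fix i assume i: "i < d"
    have "\<lfloor>y i * 2 powr real_of_int k'\<rfloor> = \<lfloor>x i * 2 powr real_of_int k'\<rfloor>"
      using y assms(3) i by (simp add: mem_dcube)
    then have "\<lfloor>y i * 2 powr real_of_int k\<rfloor> = \<lfloor>x i * 2 powr real_of_int k\<rfloor>"
      by (rule floor_scale_coarsen[OF assms(1)])
    then show "\<lfloor>y i * 2 powr real_of_int k\<rfloor> = j i" using assms(2) i by (simp add: mem_dcube)
  qed
qed

lemma dyadic_nest:
  assumes "Q1 \<in> dyadic d" "Q2 \<in> dyadic d" "Q1 \<inter> Q2 \<noteq> {}"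
  shows "Q1 \<subseteq> Q2 \<or> Q2 \<subseteq> Q1"
proof -
  obtain k j where 1: "Q1 = dcube d k j" using assms(1) by (auto simp: dyadic_def)
  obtain k' j' where 2: "Q2 = dcube d k' j'" using assms(2) by (auto simp: dyadic_def)
  obtain x where x: "x \<in> Q1" "x \<in> Q2" using assms(3) by auto
  show ?thesis
  proof (cases "k \<le> k'")
    case True then show ?thesis using dcube_nest[of k k' x d j j'] x 1 2 by auto
  next
    case False then show ?thesis using dcube_nest[of k' k x d j' j] x 1 2 by auto
  qed
qed

text \<open>Points of a cube that move only along the first axis; they witness that
  a cube is nonempty and that its side length determines its level.\<close>
definition axis_point :: "nat \<Rightarrow> int \<Rightarrow> (nat \<Rightarrow> int) \<Rightarrow> real \<Rightarrow> pt" where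
  "axis_point d k j t = (\<lambda>i. if i < d then (if i = 0 then t else of_int (j i) * 2 powr (- of_int k)) else undefined)"

lemma axis_point_mem:
  assumes "of_int (j 0) * 2 powr (- of_int k) \<le> t" "t < (of_int (j 0) + 1) * 2 powr (- of_int k)"
  shows "axis_point d k j t \<in> dcube d k j"
  unfolding dcube_def axis_point_def space_RdM using assms
  by (auto simp: PiE_def extensional_def distrib_right)

lemma dcube_nonempty: "dcube d k j \<noteq> {}"
  using axis_point_mem[of j k "of_int (j 0) * 2 powr (- of_int k)" d] by (auto simp: distrib_right)

lemma dcube_level:
  assumes d: "1 \<le> d" and sub: "dcube d k j \<subseteq> dcube d k' j'"
  shows "k' \<le> k"
proof (rule ccontr)
  assume "\<not> k' \<le> k"
  then have kk: "k < k'" by simp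
  define a where "a = of_int (j 0) * (2::real) powr (- of_int k)"
  define L where "L = (2::real) powr (- of_int k)"
  define L' where "L' = (2::real) powr (- of_int k')"
  have LL: "L' < L" unfolding L_def L'_def using kk by simp
  have L'p: "0 < L'" unfolding L'_def by simp
  have "axis_point d k j a \<in> dcube d k' j'"
    using sub axis_point_mem[of j k a d] unfolding a_def by (auto simp: distrib_right)
  then have 1: "of_int (j' 0) * L' \<le> a" using d unfolding dcube_def axis_point_def L'_def by auto
  have "axis_point d k j (a + L') \<in> dcube d k' j'"
    using sub axis_point_mem[of j k "a + L'" d] LL L'p unfolding a_def L_def by (auto simp: distrib_right)
  then have 2: "a + L' < (of_int (j' 0) + 1) * L'" using d unfolding dcube_def axis_point_def L'_def by auto
  from 1 2 show False by (simp add: distrib_right)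
qed

lemma dcube_cong: "(\<And>i. i < d \<Longrightarrow> j i = j' i) \<Longrightarrow> dcube d k j = dcube d k j'"
  unfolding dcube_def by auto

lemma countable_dyadic: "countable (dyadic d)"
proof -
  have "dyadic d \<subseteq> (\<lambda>(k, j). dcube d k j) ` (UNIV \<times> PiE {..<d} (\<lambda>_. UNIV))"
  proof
    fix Q assume "Q \<in> dyadic d"
    then obtain k j where "Q = dcube d k j" by (auto simp: dyadic_def)
    then have "Q = (\<lambda>(k, j). dcube d k j) (k, restrict j {..<d})"
      using dcube_cong[of d j "restrict j {..<d}" k] by simp
    moreover have "(k, restrict j {..<d}) \<in> UNIV \<times> PiE {..<d} (\<lambda>_. UNIV)" by auto
    ultimately show "Q \<in> (\<lambda>(k, j). dcube d k j) ` (UNIV \<times> PiE {..<d} (\<lambda>_. UNIV))" by blast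
  qed
  moreover have "countable ((UNIV::int set) \<times> PiE {..<d} (\<lambda>_. UNIV::int set))"
    by (intro countable_SIGMA countable_PiE) auto
  ultimately show ?thesis by (meson countable_image countable_subset)
qed

lemma coordinate_measurable: "i < d \<Longrightarrow> (\<lambda>x. x i) \<in> borel_measurable (RdM d)"
  using measurable_component_singleton[of i "{..<d}" "\<lambda>_. lborel"]
  unfolding RdM_def by (simp add: measurable_lborel2)

lemma dcube_sets: "dcube d k j \<in> sets (RdM d)"
proof -
  have "dcube d k j = space (RdM d) \<inter> (\<Inter>i\<in>{..<d}. {x\<in>space (RdM d).
      of_int (j i) * 2 powr (- of_int k) \<le> x i \<and> x i < (of_int (j i) + 1) * 2 powr (- of_int k)})"
    unfolding dcube_def by auto
  also have "\<dots> \<in> sets (RdM d)"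
  proof (cases "d = 0")
    case True then show ?thesis by simp
  next
    case False
    then show ?thesis using coordinate_measurable
      by (intro sets.Int sets.top sets.finite_INT) auto
  qed
  finally show ?thesis .
qed

lemma dyadic_sets: "Q \<in> dyadic d \<Longrightarrow> Q \<in> sets (RdM d)"
  unfolding dyadic_def using dcube_sets by auto

text \<open>Between a cube and a fixed ancestor there are only finitely many dyadic cubes
  (one per level); this makes maximal cubes exist in stopping-time arguments.\<close>
lemma ancestors_finite:
  assumes d: "1 \<le> d" and Q: "Q \<in> dyadic d" and Q0: "Q0 \<in> dyadic d"
  shows "finite {Q'\<in>dyadic d. Q \<subseteq> Q' \<and> Q' \<subseteq> Q0}"
proof -
  obtain k j where 1: "Q = dcube d k j" using Q by (auto simp: dyadic_def)
  obtain k0 j0 where 2: "Q0 = dcube d k0 j0" using Q0 by (auto simp: dyadic_def)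
  obtain x where x: "x \<in> Q" using 1 dcube_nonempty by blast
  have "{Q'\<in>dyadic d. Q \<subseteq> Q' \<and> Q' \<subseteq> Q0} \<subseteq>
      (\<lambda>k'. dcube d k' (\<lambda>i. \<lfloor>x i * 2 powr real_of_int k'\<rfloor>)) ` {k0..k}"
  proof
    fix Q' assume "Q' \<in> {Q'\<in>dyadic d. Q \<subseteq> Q' \<and> Q' \<subseteq> Q0}"
    then obtain k' j' where Q': "Q' = dcube d k' j'" "Q \<subseteq> Q'" "Q' \<subseteq> Q0" by (auto simp: dyadic_def)
    have "k' \<le> k" using dcube_level[OF d] Q' 1 by auto
    moreover have "k0 \<le> k'" using dcube_level[OF d] Q' 2 by auto
    moreover have "Q' = dcube d k' (\<lambda>i. \<lfloor>x i * 2 powr real_of_int k'\<rfloor>)"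
    proof -
      have "x \<in> dcube d k' j'" using x Q' by auto
      then show ?thesis unfolding Q'(1) by (intro dcube_cong) (auto simp: mem_dcube)
    qed
    ultimately show "Q' \<in> (\<lambda>k'. dcube d k' (\<lambda>i. \<lfloor>x i * 2 powr real_of_int k'\<rfloor>)) ` {k0..k}" by auto
  qed
  then show ?thesis by (rule finite_subset) simp
qed

lemma sigma_finite_RdM: "sigma_finite_measure (RdM d)"
proof -
  interpret product_sigma_finite "\<lambda>_. lborel" by standard
  show ?thesis unfolding RdM_def by (rule sigma_finite) simp
qed

section \<open>Nonnegative infinite sums\<close>

text \<open>Sums over countable index sets with values in [0,\<infinity>] are integrals for the counting
  measure (or series after enumeration); this gives measurability, Tonelli and linearity.\<close>

lemma infsum_ennreal_nat:
  fixes f :: "'a \<Rightarrow> ennreal"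
  assumes "countable A" "infinite A"
  shows "infsum f A = (\<Sum>n. f (from_nat_into A n))"
proof -
  have bij: "bij_betw (from_nat_into A) UNIV A" using bij_betw_from_nat_into assms by blast
  have "infsum f A = infsum (\<lambda>n. f (from_nat_into A n)) UNIV"
    using infsum_reindex_bij_betw[OF bij, of f] by simp
  also have "\<dots> = (\<Sum>n. f (from_nat_into A n))"
  proof -
    have "((\<lambda>n. f (from_nat_into A n)) has_sum infsum (\<lambda>n. f (from_nat_into A n)) UNIV) UNIV"
      by (rule has_sum_infsum) (rule nonneg_summable_on_complete, simp)
    then show ?thesis by (metis has_sum_imp_sums sums_unique)
  qed
  finally show ?thesis .
qed

lemma infsum_nn_integral_count:
  fixes f :: "'a \<Rightarrow> ennreal"
  assumes "countable A"
  shows "infsum f A = (\<integral>\<^sup>+x. f x \<partial>count_space A)"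
proof (cases "finite A")
  case True then show ?thesis by (simp add: nn_integral_count_space_finite)
next
  case False
  have bij: "bij_betw (from_nat_into A) UNIV A" using bij_betw_from_nat_into assms False by blast
  have "(\<integral>\<^sup>+x. f x \<partial>count_space A) = (\<integral>\<^sup>+n. f (from_nat_into A n) \<partial>count_space UNIV)"
    using nn_integral_bij_count_space[OF bij, of f] by simp
  also have "\<dots> = (\<Sum>n. f (from_nat_into A n))" by (rule nn_integral_count_space_nat)
  finally show ?thesis using infsum_ennreal_nat[OF assms False] by simp
qed

lemma borel_measurable_infsum_ennreal:
  fixes f :: "'i \<Rightarrow> 'a \<Rightarrow> ennreal"
  assumes "countable A" "\<And>i. i \<in> A \<Longrightarrow> f i \<in> borel_measurable M"
  shows "(\<lambda>x. infsum (\<lambda>i. f i x) A) \<in> borel_measurable M"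
proof (cases "finite A")
  case True
  then have "(\<lambda>x. infsum (\<lambda>i. f i x) A) = (\<lambda>x. \<Sum>i\<in>A. f i x)" by simp
  then show ?thesis using assms by simp
next
  case False
  have A: "A \<noteq> {}" using False by auto
  have "(\<lambda>x. infsum (\<lambda>i. f i x) A) = (\<lambda>x. \<Sum>n. f (from_nat_into A n) x)"
    using infsum_ennreal_nat[OF assms(1) False] by simp
  moreover have "(\<lambda>x. \<Sum>n. f (from_nat_into A n) x) \<in> borel_measurable M"
    using assms(2) from_nat_into[OF A] by measurable
  ultimately show ?thesis by simp
qed

lemma nn_integral_infsum:
  fixes f :: "'i \<Rightarrow> 'a \<Rightarrow> ennreal"
  assumes "countable A" "\<And>i. i \<in> A \<Longrightarrow> f i \<in> borel_measurable M"
  shows "(\<integral>\<^sup>+x. infsum (\<lambda>i. f i x) A \<partial>M) = infsum (\<lambda>i. \<integral>\<^sup>+x. f i x \<partial>M) A"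
  unfolding infsum_nn_integral_count[OF assms(1)]
  by (rule nn_integral_count_space_nn_integral[OF assms])

lemma infsum_cmult_ennreal:
  fixes f :: "'a \<Rightarrow> ennreal"
  assumes "countable A"
  shows "infsum (\<lambda>i. c * f i) A = c * infsum f A"
  unfolding infsum_nn_integral_count[OF assms(1)]
  by (rule nn_integral_cmult) simp

lemma infsum_multc_ennreal:
  fixes f :: "'a \<Rightarrow> ennreal"
  assumes "countable A"
  shows "infsum (\<lambda>i. f i * c) A = infsum f A * c"
  unfolding infsum_nn_integral_count[OF assms(1)]
  by (rule nn_integral_multc) simp

lemma infsum_mono_ennreal:
  fixes f g :: "'a \<Rightarrow> ennreal"
  assumes "\<And>i. i \<in> A \<Longrightarrow> f i \<le> g i"
  shows "infsum f A \<le> infsum g A"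
  by (rule infsum_mono) (auto intro: nonneg_summable_on_complete assms)

lemma ennreal_infsum_real:
  fixes f :: "'a \<Rightarrow> real"
  assumes "f summable_on A" "\<And>x. x \<in> A \<Longrightarrow> 0 \<le> f x"
  shows "ennreal (infsum f A) = infsum (\<lambda>x. ennreal (f x)) A"
proof -
  have "infsum (\<lambda>x. ennreal (f x)) A = (SUP F\<in>{F. finite F \<and> F \<subseteq> A}. sum (\<lambda>x. ennreal (f x)) F)"
    by (rule nonneg_infsum_complete) simp
  also have "\<dots> = (SUP F\<in>{F. finite F \<and> F \<subseteq> A}. ennreal (sum f F))"
    by (intro SUP_cong refl) (auto intro!: sum_ennreal assms(2))
  finally show ?thesis using infsum_nonneg_is_SUPREMUM_ennreal[OF assms] by simp
qed

text \<open>Triangle inequality for complex infinite sums, with the right-hand side in [0,\<infinity>]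
  (which also covers non-summable families, whose sum is 0).\<close>
lemma norm_infsum_ennreal:
  fixes c :: "'a \<Rightarrow> complex"
  shows "ennreal (cmod (infsum c A)) \<le> infsum (\<lambda>x. ennreal (cmod (c x))) A"
proof (cases "c summable_on A")
  case True
  then have ab: "(\<lambda>x. cmod (c x)) summable_on A"
    using summable_on_iff_abs_summable_on_complex by blast
  have "cmod (infsum c A) \<le> infsum (\<lambda>x. cmod (c x)) A"
    by (rule norm_infsum_le[OF has_sum_infsum[OF True] has_sum_infsum[OF ab]]) simp
  then have "ennreal (cmod (infsum c A)) \<le> ennreal (infsum (\<lambda>x. cmod (c x)) A)"
    by (rule ennreal_leI)
  also have "\<dots> = infsum (\<lambda>x. ennreal (cmod (c x))) A"
    by (rule ennreal_infsum_real[OF ab]) simp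
  finally show ?thesis .
next
  case False then show ?thesis by (simp add: infsum_not_exists)
qed

text \<open>The analogous bound for Bochner set integrals: without integrability the integral is 0.\<close>
lemma norm_set_integral_le_nn_integral:
  fixes f :: "'a \<Rightarrow> 'b::{banach, second_countable_topology}"
  shows "ennreal (norm (LINT x:A|M. f x)) \<le> (\<integral>\<^sup>+x. ennreal (norm (indicator A x *\<^sub>R f x)) \<partial>M)"
proof (cases "integrable M (\<lambda>x. indicator A x *\<^sub>R f x)")
  case True
  then show ?thesis unfolding set_lebesgue_integral_def by (rule integral_norm_bound_ennreal)
next
  case False
  then show ?thesis unfolding set_lebesgue_integral_def by (simp add: not_integrable_integral_eq)
qed

lemma epowr_mono:
  assumes "a \<le> b" "0 < r"
  shows "epowr a r \<le> epowr b r"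
proof (cases "b = \<infinity>")
  case True then show ?thesis by (simp add: epowr_def)
next
  case False
  then have "a \<noteq> \<infinity>" using assms(1) by (auto simp: top_unique)
  moreover have "enn2real a \<le> enn2real b" using assms(1) False by (auto intro: enn2real_mono simp: less_top[symmetric])
  ultimately show ?thesis using False assms(2)
    by (auto simp: epowr_def intro!: ennreal_leI powr_mono2)
qed

lemma epowr_ennreal: "0 \<le> c \<Longrightarrow> epowr (ennreal c) r = ennreal (c powr r)"
  by (simp add: epowr_def)

lemma epowr_0: "0 < r \<Longrightarrow> epowr 0 r = 0"
  by (simp add: epowr_def)

lemma epowr_top: "epowr \<infinity> r = \<infinity>"
  by (simp add: epowr_def)

lemma epowr_mult:
  assumes "0 < r"
  shows "epowr (a * b) r = epowr a r * epowr b r"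
proof (cases "a = 0 \<or> b = 0")
  case True then show ?thesis using assms by (auto simp: epowr_0)
next
  case False
  show ?thesis
  proof (cases "a = \<infinity> \<or> b = \<infinity>")
    case True
    then have "a * b = \<infinity>" using False by (auto simp: ennreal_mult_eq_top_iff)
    moreover have "epowr a r * epowr b r = \<infinity>"
    proof -
      have "epowr a r \<noteq> 0" "epowr b r \<noteq> 0" using False assms
        by (auto simp: epowr_def enn2real_eq_0_iff)
      moreover have "epowr a r = \<infinity> \<or> epowr b r = \<infinity>" using True by (auto simp: epowr_def)
      ultimately show ?thesis by (auto simp: ennreal_mult_eq_top_iff)
    qed
    ultimately show ?thesis by (simp add: epowr_def)
  next
    case finite: False
    then obtain x y where xy: "a = ennreal x" "b = ennreal y" "0 \<le> x" "0 \<le> y"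
      by (metis ennreal_cases infinity_ennreal_def)
    then have ab: "a * b = ennreal (x * y)" by (simp add: ennreal_mult)
    have "epowr (a * b) r = ennreal ((x * y) powr r)" unfolding ab
      by (rule epowr_ennreal) (simp add: xy)
    also have "\<dots> = ennreal (x powr r) * ennreal (y powr r)" using xy by (simp add: powr_mult ennreal_mult)
    also have "\<dots> = epowr a r * epowr b r" using xy by (simp add: epowr_ennreal)
    finally show ?thesis .
  qed
qed

lemma measurable_epowr[measurable]:
  assumes f: "f \<in> borel_measurable M"
  shows "(\<lambda>x. epowr (f x) r) \<in> borel_measurable M"
proof -
  have "(\<lambda>y::ennreal. epowr y r) \<in> borel_measurable borel"
    unfolding epowr_def by measurable
  then show ?thesis using f by (rule measurable_compose[rotated])
qed

section \<open>Real-variable tools: Young's inequality, absorption, the layer cake formula\<close>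

definition young_const :: "real \<Rightarrow> real" where
  "young_const p = (2 * (p / (p - 1))) powr p / p"

lemma young_const_nonneg: "1 < p \<Longrightarrow> 0 \<le> young_const p"
  unfolding young_const_def by simp

definition doob_const :: "real \<Rightarrow> real" where
  "doob_const p = 2 * young_const p"

text \<open>Young's inequality, arranged so that the term in t carries the factor 1/2 needed
  for absorption in Doob's inequality.\<close>
lemma young_split_real:
  fixes p a t :: real
  assumes p: "1 < p" and a: "0 \<le> a" and t: "0 \<le> t"
  shows "a * (p / (p - 1) * t powr (p - 1)) \<le> young_const p * a powr p + 1/2 * t powr p"
proof -
  define c where "c = p / (p - 1)"
  have c1: "1 < c" using p unfolding c_def by (simp add: field_simps)
  have pq: "1 / p + 1 / c = 1" using p unfolding c_def by (simp add: field_simps)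
  have x0: "0 \<le> 2 * c * a" using a c1 by simp
  have y0: "0 \<le> t powr (p - 1) / 2" by simp
  have "a * (c * t powr (p - 1)) = (2 * c * a) * (t powr (p - 1) / 2)" by (simp add: field_simps)
  also have "\<dots> \<le> (2 * c * a) powr p / p + (t powr (p - 1) / 2) powr c / c"
    by (rule Youngs_inequality[OF p c1 pq x0 y0])
  also have "(2 * c * a) powr p = (2 * c) powr p * a powr p"
    using a c1 by (simp add: powr_mult)
  also have "(t powr (p - 1) / 2) powr c = t powr p / 2 powr c"
  proof -
    have "(t powr (p - 1) / 2) powr c = (t powr (p - 1)) powr c / 2 powr c"
      using t by (simp add: powr_divide)
    also have "(t powr (p - 1)) powr c = t powr p"
      using p unfolding c_def by (simp add: powr_powr)
    finally show ?thesis .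
  qed
  also have "t powr p / 2 powr c / c \<le> 1/2 * t powr p"
  proof -
    have "2 powr 1 \<le> (2::real) powr c" by (rule powr_mono) (use c1 in auto)
    then have 2: "2 \<le> (2::real) powr c" by simp
    have "2 powr c \<le> 2 powr c * c" using c1 by simp
    then have "2 \<le> 2 powr c * c" using 2 by linarith
    then have "t powr p / (2 powr c * c) \<le> t powr p / 2"
      by (intro divide_left_mono) auto
    then show ?thesis by simp
  qed
  finally show ?thesis unfolding c_def young_const_def by (simp add: field_simps)
qed

lemma young_split:
  fixes p t :: real and a :: ennreal
  assumes p: "1 < p" and t: "0 \<le> t"
  shows "a * ennreal (p / (p - 1) * t powr (p - 1))
     \<le> ennreal (young_const p) * epowr a p + ennreal (1/2) * ennreal (t powr p)"
proof (cases "a = \<infinity>")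
  case True
  show ?thesis
  proof (cases "t = 0")
    case True then show ?thesis by simp
  next
    case False
    have "0 < young_const p" using p unfolding young_const_def by simp
    then have "ennreal (young_const p) * epowr a p = \<infinity>"
      using \<open>a = \<infinity>\<close> by (simp add: epowr_def ennreal_mult_top)
    then show ?thesis by simp
  qed
next
  case False
  then obtain x where x: "a = ennreal x" "0 \<le> x" by (metis ennreal_cases infinity_ennreal_def)
  have Y0: "0 \<le> young_const p" by (rule young_const_nonneg[OF p])
  have "ennreal (x * (p / (p - 1) * t powr (p - 1))) = ennreal x * ennreal (p / (p - 1) * t powr (p - 1))"
    by (rule ennreal_mult) (use x p t in auto)
  then have "a * ennreal (p / (p - 1) * t powr (p - 1)) = ennreal (x * (p / (p - 1) * t powr (p - 1)))"
    using x by simp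
  also have "\<dots> \<le> ennreal (young_const p * x powr p + 1/2 * t powr p)"
    by (rule ennreal_leI, rule young_split_real[OF p x(2) t])
  also have "\<dots> = ennreal (young_const p * x powr p) + ennreal (1/2 * t powr p)"
    by (rule ennreal_plus) (use Y0 in auto)
  also have "ennreal (young_const p * x powr p) = ennreal (young_const p) * ennreal (x powr p)"
    by (rule ennreal_mult) (use Y0 in auto)
  also have "ennreal (1/2 * t powr p) = ennreal (1/2) * ennreal (t powr p)"
    by (rule ennreal_mult) auto
  also have "ennreal (x powr p) = epowr a p" using x by (simp add: epowr_ennreal)
  finally show ?thesis .
qed

lemma absorb_half:
  fixes X A :: ennreal
  assumes "X < \<infinity>" "X \<le> A + ennreal (1/2) * X"
  shows "X \<le> ennreal 2 * A"
proof (cases "A = \<infinity>")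
  case True then show ?thesis by (simp add: ennreal_mult_top)
next
  case False
  obtain x where x: "X = ennreal x" "0 \<le> x" using assms(1) by (cases X rule: ennreal_cases) auto
  obtain a where a: "A = ennreal a" "0 \<le> a" using False by (metis ennreal_cases infinity_ennreal_def)
  have e1: "ennreal (1/2 * x) = ennreal (1/2) * ennreal x" by (rule ennreal_mult) (use x in auto)
  have e2: "ennreal (a + 1/2 * x) = ennreal a + ennreal (1/2 * x)" by (rule ennreal_plus) (use a x in auto)
  have "ennreal x \<le> ennreal (a + 1/2 * x)" using assms(2) unfolding e2 e1 x(1) a(1) .
  then have "x \<le> a + 1/2 * x" by (subst (asm) ennreal_le_iff) (use a x in auto)
  then have "ennreal x \<le> ennreal (2 * a)" by (intro ennreal_leI) simp
  also have "ennreal (2 * a) = ennreal 2 * ennreal a" by (rule ennreal_mult) (use a in auto)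
  finally show ?thesis using x a by simp
qed

lemma nn_integral_powr_interval:
  fixes a c \<kappa> :: real
  assumes a: "-1 < a" and c: "0 \<le> c" and k: "0 \<le> \<kappa>"
  shows "(\<integral>\<^sup>+l. ennreal (\<kappa> * l powr a) * indicator {0<..<c} l \<partial>lborel) = ennreal (\<kappa> * (c powr (a + 1) / (a + 1)))"
proof -
  have hi: "((\<lambda>l. \<kappa> * l powr a) has_integral \<kappa> * (c powr (a + 1) / (a + 1))) {0..c}"
    using has_integral_powr_from_0[OF a c] by (rule has_integral_mult_right)
  have "(\<integral>\<^sup>+l. ennreal (\<kappa> * l powr a) * indicator {0..c} l \<partial>lborel) = ennreal (\<kappa> * (c powr (a + 1) / (a + 1)))"
    by (rule nn_integral_has_integral_lebesgue'[OF _ hi]) (simp add: k)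
  moreover have "(\<integral>\<^sup>+l. ennreal (\<kappa> * l powr a) * indicator {0<..<c} l \<partial>lborel)
     = (\<integral>\<^sup>+l. ennreal (\<kappa> * l powr a) * indicator {0..c} l \<partial>lborel)"
  proof (rule nn_integral_cong_AE)
    have "AE l in lborel. l \<noteq> 0" "AE l in lborel. l \<noteq> c" by (rule AE_lborel_singleton)+
    then show "AE l in lborel. ennreal (\<kappa> * l powr a) * indicator {0<..<c} l = ennreal (\<kappa> * l powr a) * indicator {0..c} l"
      by eventually_elim (auto simp: indicator_def)
  qed
  ultimately show ?thesis by simp
qed

lemma measurable_indicator_less:
  fixes t :: "'a \<Rightarrow> 'b::{linorder_topology, second_countable_topology}"
  assumes [measurable]: "t \<in> borel_measurable M"
  shows "(\<lambda>x. indicator {x. l < t x} x :: ennreal) \<in> borel_measurable M"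
proof -
  have "(\<lambda>x. indicator {x. l < t x} x :: ennreal) = (\<lambda>x. if l < t x then 1 else 0)"
    by (auto simp: fun_eq_iff indicator_def)
  also have "\<dots> \<in> borel_measurable M" by measurable
  finally show ?thesis .
qed

lemma level_integral_measurable:
  fixes t :: "'a \<Rightarrow> real" and u :: "'a \<Rightarrow> ennreal"
  assumes sf: "sigma_finite_measure M"
    and [measurable]: "t \<in> borel_measurable M" "u \<in> borel_measurable M"
  shows "(\<lambda>l. \<integral>\<^sup>+x. u x * indicator {x. l < t x} x \<partial>M) \<in> borel_measurable lborel"
proof -
  interpret sigma_finite_measure M by (rule sf)
  have "(\<lambda>(l, x). u x * indicator {x. l < t x} x) = (\<lambda>z. u (snd z) * (if fst z < t (snd z) then 1 else 0 :: ennreal))"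
    by (auto simp: indicator_def fun_eq_iff)
  also have "\<dots> \<in> borel_measurable (lborel \<Otimes>\<^sub>M M)" by measurable
  finally show ?thesis by (rule borel_measurable_nn_integral)
qed

lemma nn_integral_layer_cake:
  fixes t :: "'a \<Rightarrow> real" and u :: "'a \<Rightarrow> ennreal" and b :: real
  assumes sf: "sigma_finite_measure M"
    and tm[measurable]: "t \<in> borel_measurable M" and um[measurable]: "u \<in> borel_measurable M"
    and t0: "\<And>x. 0 \<le> t x" and b: "0 < b"
  shows "(\<integral>\<^sup>+x. u x * ennreal (t x powr b) \<partial>M)
    = (\<integral>\<^sup>+l. ennreal (b * l powr (b - 1)) * indicator {0<..} l * (\<integral>\<^sup>+x. u x * indicator {x. l < t x} x \<partial>M) \<partial>lborel)"
proof -
  interpret sigma_finite_measure M by (rule sf)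
  interpret pair_sigma_finite M lborel
    unfolding pair_sigma_finite_def using sf sigma_finite_lborel by auto
  define k where "k x l = u x * (ennreal (b * l powr (b - 1)) * indicator {0<..<t x} l)" for x l
  have km: "case_prod k \<in> borel_measurable (M \<Otimes>\<^sub>M lborel)"
  proof -
    have "case_prod k = (\<lambda>z. u (fst z) * (ennreal (b * snd z powr (b - 1)) * (if 0 < snd z \<and> snd z < t (fst z) then 1 else 0)))"
      by (auto simp: k_def indicator_def fun_eq_iff)
    also have "\<dots> \<in> borel_measurable (M \<Otimes>\<^sub>M lborel)" by measurable
    finally show ?thesis .
  qed
  have level: "(indicator {0<..<t x} l :: ennreal) = indicator {0<..} l * indicator {x. l < t x} x" for x l
    by (simp add: indicator_def)
  have "u x * ennreal (t x powr b) = (\<integral>\<^sup>+l. k x l \<partial>lborel)" for x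
  proof -
    have "ennreal (t x powr b) = (\<integral>\<^sup>+l. ennreal (b * l powr (b - 1)) * indicator {0<..<t x} l \<partial>lborel)"
      using nn_integral_powr_interval[of "b - 1" "t x" b] b t0[of x] by simp
    then show ?thesis unfolding k_def by (simp add: nn_integral_cmult)
  qed
  then have "(\<integral>\<^sup>+x. u x * ennreal (t x powr b) \<partial>M) = (\<integral>\<^sup>+x. \<integral>\<^sup>+l. k x l \<partial>lborel \<partial>M)"
    by simp
  also have "\<dots> = (\<integral>\<^sup>+l. \<integral>\<^sup>+x. k x l \<partial>M \<partial>lborel)" by (rule Fubini'[OF km, symmetric])
  also have "\<dots> = (\<integral>\<^sup>+l. ennreal (b * l powr (b - 1)) * indicator {0<..} l * (\<integral>\<^sup>+x. u x * indicator {x. l < t x} x \<partial>M) \<partial>lborel)"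
  proof (intro nn_integral_cong)
    fix l :: real
    have hm: "(\<lambda>x. u x * indicator {x. l < t x} x) \<in> borel_measurable M"
      by (rule borel_measurable_times_ennreal[OF um measurable_indicator_less[OF tm]])
    have "k x l = (ennreal (b * l powr (b - 1)) * indicator {0<..} l) * (u x * indicator {x. l < t x} x)" for x
      unfolding k_def level by (simp only: ac_simps)
    then have "(\<integral>\<^sup>+x. k x l \<partial>M) = (\<integral>\<^sup>+x. (ennreal (b * l powr (b - 1)) * indicator {0<..} l) * (u x * indicator {x. l < t x} x) \<partial>M)"
      by simp
    also have "\<dots> = ennreal (b * l powr (b - 1)) * indicator {0<..} l * (\<integral>\<^sup>+x. u x * indicator {x. l < t x} x \<partial>M)"
      by (rule nn_integral_cmult[OF hm])
    finally show "(\<integral>\<^sup>+x. k x l \<partial>M) = ennreal (b * l powr (b - 1)) * indicator {0<..} l * (\<integral>\<^sup>+x. u x * indicator {x. l < t x} x \<partial>M)" .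
  qed
  finally show ?thesis .
qed

section \<open>Doob's inequality for weighted maximal functions over nested families\<close>

definition wmass :: "'a measure \<Rightarrow> ('a \<Rightarrow> real) \<Rightarrow> 'a set \<Rightarrow> ennreal" where
  "wmass M w Q = (\<integral>\<^sup>+x\<in>Q. ennreal (w x) \<partial>M)"

definition wint :: "'a measure \<Rightarrow> ('a \<Rightarrow> real) \<Rightarrow> ('a \<Rightarrow> ennreal) \<Rightarrow> 'a set \<Rightarrow> ennreal" where
  "wint M w f Q = (\<integral>\<^sup>+x\<in>Q. f x * ennreal (w x) \<partial>M)"

definition wavg :: "'a measure \<Rightarrow> ('a \<Rightarrow> real) \<Rightarrow> ('a \<Rightarrow> ennreal) \<Rightarrow> 'a set \<Rightarrow> ennreal" where
  "wavg M w f Q = (if wmass M w Q = 0 then 0 else wint M w f Q / wmass M w Q)"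

definition wmax :: "'a measure \<Rightarrow> ('a \<Rightarrow> real) \<Rightarrow> ('a \<Rightarrow> ennreal) \<Rightarrow> 'a set set \<Rightarrow> 'a \<Rightarrow> ennreal" where
  "wmax M w f Qs x = (SUP Q\<in>Qs. indicator Q x * wavg M w f Q)"

lemma wint_countable_Union:
  assumes T: "countable T" and sT: "\<And>Q. Q \<in> T \<Longrightarrow> Q \<in> sets M" and disj: "disjoint_family_on (\<lambda>Q. Q) T"
    and [measurable]: "g \<in> borel_measurable M" "w \<in> borel_measurable M"
  shows "wint M w g (\<Union>T) = (\<integral>\<^sup>+Q. wint M w g Q \<partial>count_space T)"
proof -
  have gw: "(\<lambda>x. g x * ennreal (w x)) \<in> borel_measurable M" by measurable
  have dens: "wint M w g Q = emeasure (density M (\<lambda>x. g x * ennreal (w x))) Q" if "Q \<in> sets M" for Q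
    unfolding wint_def using emeasure_density[OF gw that] by simp
  have "\<Union>T \<in> sets M" using T sT by (intro sets.countable_Union) auto
  then have "wint M w g (\<Union>T) = emeasure (density M (\<lambda>x. g x * ennreal (w x))) (\<Union>T)" by (rule dens)
  also have "\<dots> = (\<integral>\<^sup>+Q. emeasure (density M (\<lambda>x. g x * ennreal (w x))) Q \<partial>count_space T)"
    using emeasure_UN_countable[of T "\<lambda>Q. Q" "density M (\<lambda>x. g x * ennreal (w x))"] T sT disj by simp
  also have "\<dots> = (\<integral>\<^sup>+Q. wint M w g Q \<partial>count_space T)"
    by (intro nn_integral_cong) (simp add: dens sT)
  finally show ?thesis .
qed

locale nested_family =
  fixes M :: "'a measure" and w :: "'a \<Rightarrow> real" and Qs :: "'a set set" and E :: "'a set"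
  assumes sigma_finite: "sigma_finite_measure M"
    and countable_Qs: "countable Qs" and sets_Qs: "\<And>Q. Q \<in> Qs \<Longrightarrow> Q \<in> sets M"
    and w_measurable[measurable]: "w \<in> borel_measurable M"
    and nested: "\<And>Q1 Q2. Q1 \<in> Qs \<Longrightarrow> Q2 \<in> Qs \<Longrightarrow> Q1 \<inter> Q2 \<noteq> {} \<Longrightarrow> Q1 \<subseteq> Q2 \<or> Q2 \<subseteq> Q1"
    and finite_ancestors: "\<And>Q. Q \<in> Qs \<Longrightarrow> finite {Q'\<in>Qs. Q \<subseteq> Q'}"
    and E_sets[measurable]: "E \<in> sets M" and subset_E: "\<And>Q. Q \<in> Qs \<Longrightarrow> Q \<subseteq> E"
    and wmass_E: "wmass M w E < \<infinity>"
begin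

lemma wmax_measurable[measurable]: "wmax M w f Qs \<in> borel_measurable M"
proof -
  have "(\<lambda>x. SUP Q\<in>Qs. indicator Q x * wavg M w f Q) \<in> borel_measurable M"
    by (rule borel_measurable_SUP[OF countable_Qs]) (use sets_Qs in measurable)
  then show ?thesis unfolding wmax_def[abs_def] .
qed

lemma wmass_finite: "Q \<in> Qs \<Longrightarrow> wmass M w Q < \<infinity>"
proof -
  assume Q: "Q \<in> Qs"
  have "wmass M w Q \<le> wmass M w E" unfolding wmass_def
    by (intro nn_integral_mono) (use subset_E[OF Q] in \<open>auto simp: indicator_def\<close>)
  then show ?thesis using wmass_E by simp
qed

text \<open>Maximal members of a subfamily: every member of S lies in one of them (finitely many
  ancestors) and distinct ones are disjoint (nesting).\<close>
definition maximal_in :: "'a set set \<Rightarrow> 'a set set" where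
  "maximal_in S = {Q\<in>S. \<forall>Q'\<in>S. Q \<subseteq> Q' \<longrightarrow> Q' = Q}"

lemma exists_maximal_in:
  assumes S: "S \<subseteq> Qs" and Q: "Q \<in> S"
  shows "\<exists>Q'\<in>maximal_in S. Q \<subseteq> Q'"
proof -
  let ?A = "{Q'\<in>S. Q \<subseteq> Q'}"
  have "finite {Q'\<in>Qs. Q \<subseteq> Q'}" using finite_ancestors Q S by auto
  then have "finite ?A" by (rule finite_subset[rotated]) (use S in auto)
  moreover have "?A \<noteq> {}" using Q by auto
  ultimately obtain m where m: "m \<in> ?A" "\<And>b. b \<in> ?A \<Longrightarrow> m \<subseteq> b \<Longrightarrow> m = b"
    using finite_has_maximal by (metis (no_types, lifting))
  have "m \<in> maximal_in S" unfolding maximal_in_def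
    using m by auto
  then show ?thesis using m by auto
qed

lemma maximal_in_disjoint:
  assumes "S \<subseteq> Qs"
  shows "disjoint_family_on (\<lambda>Q. Q) (maximal_in S)"
  unfolding disjoint_family_on_def
proof (intro ballI impI)
  fix Q1 Q2 assume Q: "Q1 \<in> maximal_in S" "Q2 \<in> maximal_in S" "Q1 \<noteq> Q2"
  show "Q1 \<inter> Q2 = {}"
  proof (rule ccontr)
    assume "Q1 \<inter> Q2 \<noteq> {}"
    moreover have "Q1 \<in> Qs" "Q2 \<in> Qs" using Q assms unfolding maximal_in_def by auto
    ultimately have "Q1 \<subseteq> Q2 \<or> Q2 \<subseteq> Q1" by (rule nested[rotated 2])
    moreover have "Q1 \<in> S" "Q2 \<in> S" using Q unfolding maximal_in_def by auto
    ultimately show False using Q unfolding maximal_in_def by blast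
  qed
qed

lemma wint_ge_level:
  assumes Q: "Q \<in> Qs" and lt: "ennreal l < wavg M w f Q"
  shows "ennreal l * wmass M w Q \<le> wint M w f Q"
proof -
  have w0: "wmass M w Q \<noteq> 0" using lt unfolding wavg_def by auto
  with lt have lt2: "ennreal l < wint M w f Q / wmass M w Q" unfolding wavg_def by simp
  have wf: "wmass M w Q \<noteq> \<infinity>" using wmass_finite[OF Q] by simp
  have "ennreal l * wmass M w Q \<le> wint M w f Q / wmass M w Q * wmass M w Q"
    using lt2 by (intro mult_right_mono) auto
  also have "\<dots> = wint M w f Q"
    using w0 wf by (simp add: ennreal_divide_times ennreal_divide_self less_top)
  finally show ?thesis .
qed

lemma wmax_level_set:
  "ennreal l < wmax M w f Qs x \<longleftrightarrow> x \<in> \<Union>(maximal_in {Q\<in>Qs. ennreal l < wavg M w f Q})"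
proof -
  let ?S = "{Q\<in>Qs. ennreal l < wavg M w f Q}"
  have "ennreal l < wmax M w f Qs x \<longleftrightarrow> (\<exists>Q\<in>?S. x \<in> Q)"
    unfolding wmax_def less_SUP_iff by (auto simp: indicator_def)
  also have "\<dots> \<longleftrightarrow> (\<exists>Q\<in>maximal_in ?S. x \<in> Q)"
  proof
    assume "\<exists>Q\<in>?S. x \<in> Q"
    then obtain Q where Q: "Q \<in> ?S" "x \<in> Q" by blast
    have "?S \<subseteq> Qs" by auto
    then obtain Q' where "Q' \<in> maximal_in ?S" "Q \<subseteq> Q'" using exists_maximal_in Q(1) by blast
    then show "\<exists>Q\<in>maximal_in ?S. x \<in> Q" using Q(2) by blast
  next
    assume "\<exists>Q\<in>maximal_in ?S. x \<in> Q"
    then show "\<exists>Q\<in>?S. x \<in> Q" unfolding maximal_in_def by blast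
  qed
  finally show ?thesis by blast
qed

lemma weak_type:
  assumes fm[measurable]: "f \<in> borel_measurable M"
  shows "ennreal l * (\<integral>\<^sup>+x. ennreal (w x) * indicator E x * indicator {x. ennreal l < wmax M w f Qs x} x \<partial>M)
     \<le> (\<integral>\<^sup>+x. f x * ennreal (w x) * indicator E x * indicator {x. ennreal l < wmax M w f Qs x} x \<partial>M)"
proof -
  define S where "S = maximal_in {Q\<in>Qs. ennreal l < wavg M w f Q}"
  have SQ: "S \<subseteq> Qs" and lt: "\<And>Q. Q \<in> S \<Longrightarrow> ennreal l < wavg M w f Q"
    unfolding S_def maximal_in_def by auto
  have cS: "countable S" using SQ countable_Qs by (rule countable_subset)
  have sS: "Q \<in> sets M" if "Q \<in> S" for Q using that SQ sets_Qs by auto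
  have disj: "disjoint_family_on (\<lambda>Q. Q) S" unfolding S_def by (rule maximal_in_disjoint) auto
  have ind: "indicator E x * indicator {x. ennreal l < wmax M w f Qs x} x = (indicator (\<Union>S) x :: ennreal)" for x
    using wmax_level_set[of l f x] SQ subset_E unfolding S_def[symmetric] by (auto simp: indicator_def)
  have "ennreal l * (\<integral>\<^sup>+x. ennreal (w x) * indicator E x * indicator {x. ennreal l < wmax M w f Qs x} x \<partial>M)
      = ennreal l * wint M w (\<lambda>_. 1) (\<Union>S)"
    unfolding wint_def by (simp add: mult.assoc ind)
  also have "\<dots> = ennreal l * (\<integral>\<^sup>+Q. wint M w (\<lambda>_. 1) Q \<partial>count_space S)"
    by (simp only: wint_countable_Union[OF cS sS disj borel_measurable_const[of "1::ennreal"] w_measurable])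
  also have "\<dots> = (\<integral>\<^sup>+Q. ennreal l * wmass M w Q \<partial>count_space S)"
    by (simp add: nn_integral_cmult wint_def wmass_def)
  also have "\<dots> \<le> (\<integral>\<^sup>+Q. wint M w f Q \<partial>count_space S)"
    using SQ lt by (intro nn_integral_mono wint_ge_level) auto
  also have "\<dots> = wint M w f (\<Union>S)"
    by (rule wint_countable_Union[OF cS sS disj fm w_measurable, symmetric])
  also have "\<dots> = (\<integral>\<^sup>+x. f x * ennreal (w x) * indicator E x * indicator {x. ennreal l < wmax M w f Qs x} x \<partial>M)"
    unfolding wint_def by (simp add: mult.assoc ind)
  finally show ?thesis .
qed

end

text \<open>The maximal function truncated at height K, as a real-valued function; the
  truncation makes the absorption argument legitimate.\<close>
definition wmax_trunc :: "'a measure \<Rightarrow> ('a \<Rightarrow> real) \<Rightarrow> ('a \<Rightarrow> ennreal) \<Rightarrow> 'a set set \<Rightarrow> real \<Rightarrow> 'a \<Rightarrow> real" where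
  "wmax_trunc M w f Qs K x = enn2real (min (wmax M w f Qs x) (ennreal K))"

lemma wmax_trunc_bounds:
  assumes K: "0 < K"
  shows "0 \<le> wmax_trunc M w f Qs K x" "wmax_trunc M w f Qs K x \<le> K"
    "\<And>l. 0 \<le> l \<Longrightarrow> l < wmax_trunc M w f Qs K x \<longleftrightarrow> l < K \<and> ennreal l < wmax M w f Qs x"
proof -
  have fin: "min (wmax M w f Qs x) (ennreal K) \<le> ennreal K" by simp
  then have mt: "min (wmax M w f Qs x) (ennreal K) = ennreal (wmax_trunc M w f Qs K x)"
    unfolding wmax_trunc_def by (metis ennreal_enn2real ennreal_less_top order.strict_trans1)
  show "0 \<le> wmax_trunc M w f Qs K x" unfolding wmax_trunc_def by simp
  show "wmax_trunc M w f Qs K x \<le> K" using fin K unfolding mt by (simp add: ennreal_le_iff)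
  fix l :: real assume l: "0 \<le> l"
  have "l < wmax_trunc M w f Qs K x \<longleftrightarrow> ennreal l < ennreal (wmax_trunc M w f Qs K x)"
    using l by (simp add: ennreal_less_iff)
  also have "\<dots> \<longleftrightarrow> ennreal l < min (wmax M w f Qs x) (ennreal K)" unfolding mt ..
  also have "\<dots> \<longleftrightarrow> l < K \<and> ennreal l < wmax M w f Qs x" using l by (auto simp: ennreal_less_iff)
  finally show "l < wmax_trunc M w f Qs K x \<longleftrightarrow> l < K \<and> ennreal l < wmax M w f Qs x" .
qed

lemma wmax_trunc_mono:
  assumes "0 < K1" "K1 \<le> K2"
  shows "wmax_trunc M w f Qs K1 x \<le> wmax_trunc M w f Qs K2 x"
proof -
  have "min (wmax M w f Qs x) (ennreal K1) \<le> min (wmax M w f Qs x) (ennreal K2)"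
    using assms by (intro min.mono ennreal_leI) auto
  moreover have "min (wmax M w f Qs x) (ennreal K2) < top"
    by (meson ennreal_less_top min.cobounded2 order.strict_trans1)
  ultimately show ?thesis unfolding wmax_trunc_def by (rule enn2real_mono)
qed

lemma epowr_wmax_le_SUP_trunc:
  assumes p: "1 < p"
  shows "epowr (wmax M w f Qs x) p \<le> (SUP N. ennreal (wmax_trunc M w f Qs (real (Suc N)) x powr p))"
proof (cases "wmax M w f Qs x = \<infinity>")
  case True
  have tr: "wmax_trunc M w f Qs (real (Suc N)) x = real (Suc N)" for N
    unfolding wmax_trunc_def True by simp
  have "(SUP N. ennreal (wmax_trunc M w f Qs (real (Suc N)) x powr p)) = top"
  proof (rule ennreal_SUP_eq_top)
    fix n :: nat
    have "real (Suc n) powr 1 \<le> real (Suc n) powr p" by (rule powr_mono) (use p in auto)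
    then have "real n \<le> real (Suc n) powr p" by simp
    then have "of_nat n \<le> ennreal (wmax_trunc M w f Qs (real (Suc n)) x powr p)" unfolding tr
      by (simp add: ennreal_of_nat_eq_real_of_nat ennreal_leI)
    then show "\<exists>i\<in>UNIV. of_nat n \<le> ennreal (wmax_trunc M w f Qs (real (Suc i)) x powr p)" by blast
  qed
  then show ?thesis by (simp only: True epowr_top top_greatest order_refl)
next
  case False
  then obtain v where v: "wmax M w f Qs x = ennreal v" "0 \<le> v"
    by (cases "wmax M w f Qs x" rule: ennreal_cases) auto
  obtain N where N: "v < real N" using reals_Archimedean2 by blast
  have "ennreal v \<le> ennreal (real (Suc N))" using N by (intro ennreal_leI) simp
  then have "wmax_trunc M w f Qs (real (Suc N)) x = v" unfolding wmax_trunc_def v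
    using v by (simp add: min_absorb1)
  then have "epowr (wmax M w f Qs x) p = ennreal (wmax_trunc M w f Qs (real (Suc N)) x powr p)"
    using v by (simp add: epowr_ennreal)
  also have "\<dots> \<le> (SUP N. ennreal (wmax_trunc M w f Qs (real (Suc N)) x powr p))" by (rule SUP_upper) simp
  finally show ?thesis .
qed

context nested_family
begin

lemma wmax_trunc_measurable[measurable]: "wmax_trunc M w f Qs K \<in> borel_measurable M"
proof -
  have "(\<lambda>x. enn2real (min (wmax M w f Qs x) (ennreal K))) \<in> borel_measurable M"
    using wmax_measurable by (intro borel_measurable_enn2real borel_measurable_min) auto
  then show ?thesis unfolding wmax_trunc_def[abs_def] .
qed

text \<open>The weak-type estimate on the level sets of the truncated maximal function, with the
  power weights that appear in the layer cake formulas for exponents p and p - 1.\<close>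
lemma level_set_bound:
  assumes p: "1 < p" and K: "0 < K" and fm[measurable]: "f \<in> borel_measurable M"
  shows "ennreal (p * l powr (p - 1)) * indicator {0<..} l
      * (\<integral>\<^sup>+x. ennreal (w x) * indicator E x * indicator {x. l < wmax_trunc M w f Qs K x} x \<partial>M)
    \<le> ennreal (p / (p - 1)) * (ennreal ((p - 1) * l powr (p - 1 - 1)) * indicator {0<..} l
      * (\<integral>\<^sup>+x. f x * (ennreal (w x) * indicator E x) * indicator {x. l < wmax_trunc M w f Qs K x} x \<partial>M))"
    (is "?L \<le> ?R")
proof (cases "0 < l \<and> l < K")
  case True
  then have l: "0 < l" "l < K" by auto
  have "l < wmax_trunc M w f Qs K x \<longleftrightarrow> ennreal l < wmax M w f Qs x" for x
    using wmax_trunc_bounds(3)[OF K less_imp_le[OF l(1)]] l(2) by simp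
  then have level: "(indicator {x. l < wmax_trunc M w f Qs K x} x :: ennreal)
      = indicator {x. ennreal l < wmax M w f Qs x} x" for x
    by (simp add: indicator_def)
  have weak: "ennreal l * (\<integral>\<^sup>+x. ennreal (w x) * indicator E x * indicator {x. l < wmax_trunc M w f Qs K x} x \<partial>M)
     \<le> (\<integral>\<^sup>+x. f x * (ennreal (w x) * indicator E x) * indicator {x. l < wmax_trunc M w f Qs K x} x \<partial>M)"
    using weak_type[OF fm] by (simp only: level mult.assoc)
  have "l powr (p - 2 + 1) = l powr (p - 2) * l powr 1" by (rule powr_add)
  then have split: "p * l powr (p - 1) = p * l powr (p - 2) * l" using l by simp
  have pl: "ennreal (p * l powr (p - 1)) = ennreal (p * l powr (p - 2)) * ennreal l"
    unfolding split using l p by (intro ennreal_mult) auto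
  have "p / (p - 1) * ((p - 1) * l powr (p - 1 - 1)) = p * l powr (p - 2)"
    using p by (simp add: divide_simps)
  then have pl': "ennreal (p / (p - 1)) * ennreal ((p - 1) * l powr (p - 1 - 1)) = ennreal (p * l powr (p - 2))"
    using l p by (simp add: ennreal_mult[symmetric])
  have ind1: "indicator {0<..} l = (1::ennreal)" using l by simp
  have "?L = ennreal (p * l powr (p - 2)) * (ennreal l
      * (\<integral>\<^sup>+x. ennreal (w x) * indicator E x * indicator {x. l < wmax_trunc M w f Qs K x} x \<partial>M))"
    by (simp only: pl ind1 mult_1_right mult.assoc)
  also have "\<dots> \<le> ennreal (p * l powr (p - 2))
      * (\<integral>\<^sup>+x. f x * (ennreal (w x) * indicator E x) * indicator {x. l < wmax_trunc M w f Qs K x} x \<partial>M)"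
    by (rule mult_left_mono[OF weak]) simp
  also have "\<dots> = ?R"
    by (simp only: pl'[symmetric] ind1 mult_1_right mult.assoc)
  finally show ?thesis .
next
  case False
  have "indicator {x. l < wmax_trunc M w f Qs K x} x = (0::ennreal)" if "0 < l" for x
  proof -
    have "wmax_trunc M w f Qs K x \<le> K" by (rule wmax_trunc_bounds(2)[OF K])
    then have "\<not> l < wmax_trunc M w f Qs K x" using False that by auto
    then show ?thesis by simp
  qed
  then show ?thesis by (cases "0 < l") simp_all
qed

text \<open>The key step of Doob's inequality for the truncation t of the maximal function:
  by the layer cake formula for t^p, the weak-type bound on each level set, and the layer
  cake formula for t^(p-1), the p-th moment of t is at most p' times the mixed moment f t^(p-1).\<close>
lemma trunc_moment_le_mixed:
  assumes p: "1 < p" and K: "0 < K" and fm[measurable]: "f \<in> borel_measurable M"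
  shows "(\<integral>\<^sup>+x. ennreal (w x) * indicator E x * ennreal (wmax_trunc M w f Qs K x powr p) \<partial>M)
    \<le> ennreal (p / (p - 1)) * (\<integral>\<^sup>+x. f x * (ennreal (w x) * indicator E x) * ennreal (wmax_trunc M w f Qs K x powr (p - 1)) \<partial>M)"
proof -
  define t where "t = wmax_trunc M w f Qs K"
  define g where "g x = ennreal (w x) * indicator E x" for x
  have tm[measurable]: "t \<in> borel_measurable M" and gm[measurable]: "g \<in> borel_measurable M"
    unfolding t_def g_def[abs_def] by simp_all
  have fgm: "(\<lambda>x. f x * g x) \<in> borel_measurable M" by measurable
  have t0: "0 \<le> t x" for x unfolding t_def by (rule wmax_trunc_bounds(1)[OF K])
  have "(\<integral>\<^sup>+x. g x * ennreal (t x powr p) \<partial>M)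
      = (\<integral>\<^sup>+l. ennreal (p * l powr (p - 1)) * indicator {0<..} l * (\<integral>\<^sup>+x. g x * indicator {x. l < t x} x \<partial>M) \<partial>lborel)"
    using nn_integral_layer_cake[OF sigma_finite tm gm t0, of p] p by simp
  also have "\<dots> \<le> (\<integral>\<^sup>+l. ennreal (p / (p - 1)) * (ennreal ((p - 1) * l powr (p - 1 - 1)) * indicator {0<..} l
      * (\<integral>\<^sup>+x. f x * g x * indicator {x. l < t x} x \<partial>M)) \<partial>lborel)"
    unfolding t_def g_def by (intro nn_integral_mono level_set_bound[OF p K fm])
  also have "\<dots> = ennreal (p / (p - 1)) * (\<integral>\<^sup>+l. ennreal ((p - 1) * l powr (p - 1 - 1)) * indicator {0<..} l
      * (\<integral>\<^sup>+x. f x * g x * indicator {x. l < t x} x \<partial>M) \<partial>lborel)"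
    using level_integral_measurable[OF sigma_finite, of t "\<lambda>x. f x * g x"] by (intro nn_integral_cmult) simp_all
  also have "\<dots> = ennreal (p / (p - 1)) * (\<integral>\<^sup>+x. f x * g x * ennreal (t x powr (p - 1)) \<partial>M)"
    using nn_integral_layer_cake[OF sigma_finite tm fgm t0, of "p - 1"] p by simp
  finally show ?thesis unfolding t_def g_def .
qed

text \<open>The truncation is bounded by K and E has finite weighted mass.\<close>
lemma trunc_moment_finite:
  assumes K: "0 < K" and p: "0 \<le> p"
  shows "(\<integral>\<^sup>+x. ennreal (w x) * indicator E x * ennreal (wmax_trunc M w f Qs K x powr p) \<partial>M) < \<infinity>"
proof -
  have "(\<integral>\<^sup>+x. ennreal (w x) * indicator E x * ennreal (wmax_trunc M w f Qs K x powr p) \<partial>M)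
      \<le> (\<integral>\<^sup>+x. ennreal (K powr p) * (ennreal (w x) * indicator E x) \<partial>M)"
  proof (rule nn_integral_mono)
    fix x
    have "wmax_trunc M w f Qs K x powr p \<le> K powr p"
      using wmax_trunc_bounds(1,2)[OF K] p by (intro powr_mono2) auto
    then have "(ennreal (w x) * indicator E x) * ennreal (wmax_trunc M w f Qs K x powr p)
        \<le> (ennreal (w x) * indicator E x) * ennreal (K powr p)"
      by (intro mult_left_mono ennreal_leI) simp_all
    then show "ennreal (w x) * indicator E x * ennreal (wmax_trunc M w f Qs K x powr p)
        \<le> ennreal (K powr p) * (ennreal (w x) * indicator E x)"
      by (simp only: mult.commute)
  qed
  also have "\<dots> = ennreal (K powr p) * wmass M w E"
    unfolding wmass_def by (simp add: nn_integral_cmult mult.assoc)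
  also have "\<dots> < \<infinity>" using wmass_E by (simp add: ennreal_mult_less_top)
  finally show ?thesis .
qed

text \<open>Doob's inequality for the truncation: Young's inequality turns the previous bound into
  X \<le> Y F + X/2 for the finite quantity X, which is then absorbed.\<close>
lemma doob_trunc:
  assumes p: "1 < p" and K: "0 < K" and fm[measurable]: "f \<in> borel_measurable M"
  shows "(\<integral>\<^sup>+x. ennreal (w x) * indicator E x * ennreal (wmax_trunc M w f Qs K x powr p) \<partial>M)
    \<le> ennreal 2 * (ennreal (young_const p) * (\<integral>\<^sup>+x. ennreal (w x) * indicator E x * epowr (f x) p \<partial>M))"
proof -
  define t where "t = wmax_trunc M w f Qs K"
  define g where "g x = ennreal (w x) * indicator E x" for x
  have tm[measurable]: "t \<in> borel_measurable M" and gm[measurable]: "g \<in> borel_measurable M"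
    unfolding t_def g_def[abs_def] by simp_all
  have t0: "0 \<le> t x" for x unfolding t_def by (rule wmax_trunc_bounds(1)[OF K])
  define X where "X = (\<integral>\<^sup>+x. g x * ennreal (t x powr p) \<partial>M)"
  define F where "F = (\<integral>\<^sup>+x. g x * epowr (f x) p \<partial>M)"
  have "X \<le> ennreal (p / (p - 1)) * (\<integral>\<^sup>+x. f x * g x * ennreal (t x powr (p - 1)) \<partial>M)"
    unfolding X_def t_def g_def by (rule trunc_moment_le_mixed[OF p K fm])
  also have "\<dots> = (\<integral>\<^sup>+x. g x * (f x * ennreal (p / (p - 1) * t x powr (p - 1))) \<partial>M)"
  proof -
    have "ennreal (p / (p - 1) * t x powr (p - 1)) = ennreal (p / (p - 1)) * ennreal (t x powr (p - 1))" for x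
      using p by (intro ennreal_mult) auto
    then have "ennreal (p / (p - 1)) * (f x * g x * ennreal (t x powr (p - 1)))
      = g x * (f x * ennreal (p / (p - 1) * t x powr (p - 1)))" for x by (simp only: ac_simps)
    moreover have "(\<lambda>x. f x * g x * ennreal (t x powr (p - 1))) \<in> borel_measurable M" by measurable
    ultimately show ?thesis by (simp add: nn_integral_cmult[symmetric])
  qed
  also have "\<dots> \<le> (\<integral>\<^sup>+x. g x * (ennreal (young_const p) * epowr (f x) p + ennreal (1/2) * ennreal (t x powr p)) \<partial>M)"
    by (intro nn_integral_mono mult_left_mono young_split[OF p t0]) simp
  also have "\<dots> = (\<integral>\<^sup>+x. ennreal (young_const p) * (g x * epowr (f x) p) + ennreal (1/2) * (g x * ennreal (t x powr p)) \<partial>M)"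
    by (intro nn_integral_cong) (simp only: distrib_left ac_simps)
  also have "\<dots> = (\<integral>\<^sup>+x. ennreal (young_const p) * (g x * epowr (f x) p) \<partial>M) + (\<integral>\<^sup>+x. ennreal (1/2) * (g x * ennreal (t x powr p)) \<partial>M)"
    by (intro nn_integral_add) measurable
  also have "\<dots> = ennreal (young_const p) * F + ennreal (1/2) * X"
    unfolding F_def X_def by (simp add: nn_integral_cmult)
  finally have ineq: "X \<le> ennreal (young_const p) * F + ennreal (1/2) * X" .
  have "X < \<infinity>" unfolding X_def t_def g_def using p by (intro trunc_moment_finite[OF K]) simp
  from absorb_half[OF this ineq] show ?thesis unfolding X_def F_def g_def t_def .
qed

text \<open>Doob's inequality in L^p(w) on E, by monotone convergence over the truncations.\<close>
lemma doob:
  assumes p: "1 < p" and fm[measurable]: "f \<in> borel_measurable M"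
  shows "(\<integral>\<^sup>+x\<in>E. epowr (wmax M w f Qs x) p * ennreal (w x) \<partial>M)
    \<le> ennreal (doob_const p) * (\<integral>\<^sup>+x\<in>E. epowr (f x) p * ennreal (w x) \<partial>M)"
proof -
  define h where "h N x = ennreal (w x) * indicator E x * ennreal (wmax_trunc M w f Qs (real (Suc N)) x powr p)" for N x
  have hm[measurable]: "h N \<in> borel_measurable M" for N unfolding h_def[abs_def] by measurable
  have inc: "incseq h"
  proof (intro incseq_SucI le_funI)
    fix N x
    have "wmax_trunc M w f Qs (real (Suc N)) x \<le> wmax_trunc M w f Qs (real (Suc (Suc N))) x"
      by (rule wmax_trunc_mono) auto
    then have "wmax_trunc M w f Qs (real (Suc N)) x powr p \<le> wmax_trunc M w f Qs (real (Suc (Suc N))) x powr p"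
      using p by (intro powr_mono2) (auto simp: wmax_trunc_def)
    then show "h N x \<le> h (Suc N) x" unfolding h_def by (intro mult_left_mono ennreal_leI) auto
  qed
  have "(\<integral>\<^sup>+x\<in>E. epowr (wmax M w f Qs x) p * ennreal (w x) \<partial>M) \<le> (\<integral>\<^sup>+x. (SUP N. h N x) \<partial>M)"
  proof (rule nn_integral_mono)
    fix x
    have "epowr (wmax M w f Qs x) p * ennreal (w x) * indicator E x
       = (ennreal (w x) * indicator E x) * epowr (wmax M w f Qs x) p" by (simp add: ac_simps)
    also have "\<dots> \<le> (ennreal (w x) * indicator E x) * (SUP N. ennreal (wmax_trunc M w f Qs (real (Suc N)) x powr p))"
      by (intro mult_left_mono epowr_wmax_le_SUP_trunc[OF p]) simp
    also have "\<dots> = (SUP N. h N x)" unfolding h_def by (simp add: SUP_mult_left_ennreal)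
    finally show "epowr (wmax M w f Qs x) p * ennreal (w x) * indicator E x \<le> (SUP N. h N x)" .
  qed
  also have "\<dots> = (SUP N. \<integral>\<^sup>+x. h N x \<partial>M)"
    by (rule nn_integral_monotone_convergence_SUP[OF inc]) simp
  also have "\<dots> \<le> ennreal 2 * (ennreal (young_const p) * (\<integral>\<^sup>+x. ennreal (w x) * indicator E x * epowr (f x) p \<partial>M))"
    unfolding h_def by (intro SUP_least doob_trunc[OF p _ fm]) auto
  also have "\<dots> = ennreal (doob_const p) * (\<integral>\<^sup>+x\<in>E. epowr (f x) p * ennreal (w x) \<partial>M)"
  proof -
    have "ennreal (doob_const p) = ennreal 2 * ennreal (young_const p)"
      unfolding doob_const_def using young_const_nonneg[OF p] by (intro ennreal_mult) auto
    moreover have "(\<integral>\<^sup>+x. ennreal (w x) * indicator E x * epowr (f x) p \<partial>M) = (\<integral>\<^sup>+x\<in>E. epowr (f x) p * ennreal (w x) \<partial>M)"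
      by (intro nn_integral_cong) (simp add: ac_simps)
    ultimately show ?thesis by (simp add: mult.assoc)
  qed
  finally show ?thesis .
qed

end

section \<open>The kernel of a positive Haar shift\<close>

lemma child_comb_measurable:
  assumes "child_comb d R f"
  shows "f \<in> borel_measurable (RdM d)"
proof -
  obtain c where c: "f = (\<lambda>y. \<Sum>R''\<in>dchildren d R. c R'' * indicator R'' y)"
    using assms unfolding child_comb_def by blast
  have "(\<lambda>y. \<Sum>R''\<in>dchildren d R. c R'' * indicator R'' y) \<in> borel_measurable (RdM d)"
  proof (rule borel_measurable_sum)
    fix R'' assume "R'' \<in> dchildren d R"
    then have "R'' \<in> sets (RdM d)" unfolding dchildren_def using dyadic_sets by auto
    then show "(\<lambda>y. c R'' * indicator R'' y) \<in> borel_measurable (RdM d)" by measurable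
  qed
  then show ?thesis using c by simp
qed

lemma child_comb_zero:
  assumes "child_comb d R f" "y \<notin> R"
  shows "f y = 0"
proof -
  obtain c where c: "f = (\<lambda>y. \<Sum>R''\<in>dchildren d R. c R'' * indicator R'' y)"
    using assms(1) unfolding child_comb_def by blast
  have "\<And>R''. R'' \<in> dchildren d R \<Longrightarrow> y \<notin> R''" using assms(2) unfolding dchildren_def by auto
  then show ?thesis unfolding c by (auto intro!: sum.neutral)
qed

definition Sadj :: "nat \<Rightarrow> (pt set \<Rightarrow> pt \<Rightarrow> pt \<Rightarrow> real) \<Rightarrow> (pt \<Rightarrow> real) \<Rightarrow> pt \<Rightarrow> ennreal" where
  "Sadj d s u y = (\<Sum>\<^sub>\<infinity>Q\<in>dyadic d. (\<integral>\<^sup>+x\<in>Q. ennreal (s Q x y * u x) \<partial>RdM d) / ennreal (vol d Q))"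

locale positive_shift =
  fixes d m n :: nat and h k :: "pt set \<Rightarrow> pt set \<Rightarrow> pt set \<Rightarrow> pt \<Rightarrow> real"
  assumes shift: "pos_haar_shift d m n h k"
begin

abbreviation "M \<equiv> RdM d"
abbreviation "s \<equiv> skernel d m n h k"

lemma pair_parts:
  assumes "Q \<in> dyadic d" "(Q', R') \<in> shift_pairs d m n Q"
  shows "child_comb d R' (h Q Q' R')" "child_comb d Q' (k Q Q' R')" "R' \<subseteq> Q" "Q' \<subseteq> Q"
  using shift assms unfolding pos_haar_shift_def shift_pairs_def by auto

lemma kernel_nonneg: "Q \<in> dyadic d \<Longrightarrow> 0 \<le> s Q x y"
  using shift unfolding pos_haar_shift_def by auto

lemma kernel_zero_outside:
  assumes Q: "Q \<in> dyadic d" and out: "x \<notin> Q \<or> y \<notin> Q"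
  shows "s Q x y = 0"
  unfolding skernel_def
proof (rule sum.neutral, intro ballI)
  fix pr assume pr: "pr \<in> shift_pairs d m n Q"
  obtain Q' R' where e: "pr = (Q', R')" by (cases pr)
  note parts = pair_parts[OF Q pr[unfolded e]]
  have "h Q Q' R' y * k Q Q' R' x = 0"
    using out parts child_comb_zero[OF parts(1)] child_comb_zero[OF parts(2)] by auto
  then show "(case pr of (Q', R') \<Rightarrow> h Q Q' R' y * k Q Q' R' x) = 0" unfolding e by simp
qed

lemma kernel_measurable:
  assumes Q: "Q \<in> dyadic d"
  shows "(\<lambda>z. s Q (fst z) (snd z)) \<in> borel_measurable (M \<Otimes>\<^sub>M M)"
proof -
  have "(\<lambda>z. \<Sum>pr\<in>shift_pairs d m n Q. h Q (fst pr) (snd pr) (snd z) * k Q (fst pr) (snd pr) (fst z)) \<in> borel_measurable (M \<Otimes>\<^sub>M M)"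
  proof (rule borel_measurable_sum)
    fix pr assume pr: "pr \<in> shift_pairs d m n Q"
    obtain Q' R' where e: "pr = (Q', R')" by (cases pr)
    have [measurable]: "h Q Q' R' \<in> borel_measurable M" "k Q Q' R' \<in> borel_measurable M"
      using pair_parts[OF Q pr[unfolded e]] child_comb_measurable by auto
    show "(\<lambda>z. h Q (fst pr) (snd pr) (snd z) * k Q (fst pr) (snd pr) (fst z)) \<in> borel_measurable (M \<Otimes>\<^sub>M M)"
      unfolding e fst_conv snd_conv by measurable
  qed
  moreover have "(\<lambda>z. s Q (fst z) (snd z)) = (\<lambda>z. \<Sum>pr\<in>shift_pairs d m n Q. h Q (fst pr) (snd pr) (snd z) * k Q (fst pr) (snd pr) (fst z))"
    unfolding skernel_def by (auto simp: case_prod_beta)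
  ultimately show ?thesis by simp
qed

lemma kernel_measurable_swap:
  assumes Q: "Q \<in> dyadic d"
  shows "(\<lambda>z. s Q (snd z) (fst z)) \<in> borel_measurable (M \<Otimes>\<^sub>M M)"
proof -
  have "(\<lambda>z. (snd z, fst z)) \<in> M \<Otimes>\<^sub>M M \<rightarrow>\<^sub>M M \<Otimes>\<^sub>M M" by measurable
  from measurable_compose[OF this kernel_measurable[OF Q]] show ?thesis by simp
qed

lemma kernel_measurable_x:
  assumes Q: "Q \<in> dyadic d" and y: "y \<in> space M"
  shows "(\<lambda>x. s Q x y) \<in> borel_measurable M"
  using measurable_compose[OF measurable_Pair2'[OF y] kernel_measurable[OF Q]] by simp

lemma kernel_measurable_y:
  assumes Q: "Q \<in> dyadic d" and x: "x \<in> space M"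
  shows "(\<lambda>y. s Q x y) \<in> borel_measurable M"
  using measurable_compose[OF measurable_Pair1'[OF x] kernel_measurable[OF Q]] by simp

text \<open>Since s_Q lives on Q \<times> Q, integrating over Q in either variable is integrating over
  the whole space, and the kernel splits off as a factor.\<close>
lemma kernel_set_integral:
  assumes Q: "Q \<in> dyadic d" and u0: "\<And>z. z \<in> space M \<Longrightarrow> 0 \<le> u z"
  shows "(\<integral>\<^sup>+x\<in>Q. ennreal (s Q x y * u x) \<partial>M) = (\<integral>\<^sup>+x. ennreal (s Q x y) * ennreal (u x) \<partial>M)"
    and "(\<integral>\<^sup>+y\<in>Q. ennreal (s Q x y * u y) \<partial>M) = (\<integral>\<^sup>+y. ennreal (s Q x y) * ennreal (u y) \<partial>M)"
proof -
  have drop_Q: "ennreal (s Q x y * u z) * indicator Q z = ennreal (s Q x y) * ennreal (u z)"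
    if "z = x \<or> z = y" "z \<in> space M" for x y z
    using that kernel_nonneg[OF Q] kernel_zero_outside[OF Q] u0 by (cases "z \<in> Q") (auto simp: ennreal_mult)
  show "(\<integral>\<^sup>+x\<in>Q. ennreal (s Q x y * u x) \<partial>M) = (\<integral>\<^sup>+x. ennreal (s Q x y) * ennreal (u x) \<partial>M)"
    "(\<integral>\<^sup>+y\<in>Q. ennreal (s Q x y * u y) \<partial>M) = (\<integral>\<^sup>+y. ennreal (s Q x y) * ennreal (u y) \<partial>M)"
    by (auto intro!: nn_integral_cong simp: drop_Q)
qed

lemma kernel_integral_measurable:
  assumes Q: "Q \<in> dyadic d" and um[measurable]: "u \<in> borel_measurable M"
  shows "(\<lambda>x. \<integral>\<^sup>+y\<in>Q. ennreal (s Q x y * u y) \<partial>M) \<in> borel_measurable M"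
    and "(\<lambda>y. \<integral>\<^sup>+x\<in>Q. ennreal (s Q x y * u x) \<partial>M) \<in> borel_measurable M"
proof -
  interpret sigma_finite_measure M by (rule sigma_finite_RdM)
  have [measurable]: "Q \<in> sets M" using Q dyadic_sets by auto
  have [measurable]: "(\<lambda>z. s Q (fst z) (snd z)) \<in> borel_measurable (M \<Otimes>\<^sub>M M)"
    "(\<lambda>z. s Q (snd z) (fst z)) \<in> borel_measurable (M \<Otimes>\<^sub>M M)"
    using kernel_measurable[OF Q] kernel_measurable_swap[OF Q] .
  have "case_prod (\<lambda>x y. ennreal (s Q x y * u y) * indicator Q y)
     = (\<lambda>z. ennreal (s Q (fst z) (snd z) * u (snd z)) * indicator Q (snd z))" by auto
  also have "\<dots> \<in> borel_measurable (M \<Otimes>\<^sub>M M)" by measurable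
  finally show "(\<lambda>x. \<integral>\<^sup>+y\<in>Q. ennreal (s Q x y * u y) \<partial>M) \<in> borel_measurable M"
    by (rule borel_measurable_nn_integral)
  have "case_prod (\<lambda>y x. ennreal (s Q x y * u x) * indicator Q x)
     = (\<lambda>z. ennreal (s Q (snd z) (fst z) * u (snd z)) * indicator Q (snd z))" by auto
  also have "\<dots> \<in> borel_measurable (M \<Otimes>\<^sub>M M)" by measurable
  finally show "(\<lambda>y. \<integral>\<^sup>+x\<in>Q. ennreal (s Q x y * u x) \<partial>M) \<in> borel_measurable M"
    by (rule borel_measurable_nn_integral)
qed

lemma Spos_measurable:
  assumes "u \<in> borel_measurable M"
  shows "Spos d s u \<in> borel_measurable M"
  unfolding Spos_def[abs_def] divide_ennreal_def
  using kernel_integral_measurable(1)[OF _ assms]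
  by (intro borel_measurable_infsum_ennreal[OF countable_dyadic] borel_measurable_times_ennreal) auto

lemma Sadj_measurable:
  assumes "u \<in> borel_measurable M"
  shows "Sadj d s u \<in> borel_measurable M"
  unfolding Sadj_def[abs_def] divide_ennreal_def
  using kernel_integral_measurable(2)[OF _ assms]
  by (intro borel_measurable_infsum_ennreal[OF countable_dyadic] borel_measurable_times_ennreal) auto

text \<open>Positivity of the kernel makes S monotone.\<close>
lemma Spos_mono:
  assumes "\<And>y. y \<in> space M \<Longrightarrow> 0 \<le> f y \<and> f y \<le> f' y"
  shows "Spos d s f x \<le> Spos d s f' x"
  unfolding Spos_def
proof (intro infsum_mono_ennreal divide_right_mono_ennreal nn_integral_mono)
  fix Q y assume "Q \<in> dyadic d" "y \<in> space M"
  then show "ennreal (s Q x y * f y) * indicator Q y \<le> ennreal (s Q x y * f' y) * indicator Q y"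
    using assms kernel_nonneg by (intro mult_right_mono ennreal_leI mult_left_mono) auto
qed

lemma cube_duality:
  assumes Q: "Q \<in> dyadic d"
    and um[measurable]: "u \<in> borel_measurable M" and vm[measurable]: "v \<in> borel_measurable M"
    and u0: "\<And>x. x \<in> space M \<Longrightarrow> 0 \<le> u x" and v0: "\<And>y. y \<in> space M \<Longrightarrow> 0 \<le> v y"
  shows "(\<integral>\<^sup>+y. (\<integral>\<^sup>+x\<in>Q. ennreal (s Q x y * u x) \<partial>M) * ennreal (v y) \<partial>M)
       = (\<integral>\<^sup>+x. ennreal (u x) * (\<integral>\<^sup>+y\<in>Q. ennreal (s Q x y * v y) \<partial>M) \<partial>M)"
proof -
  interpret pair_sigma_finite M M
    unfolding pair_sigma_finite_def using sigma_finite_RdM by auto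
  have [measurable]: "(\<lambda>z. s Q (fst z) (snd z)) \<in> borel_measurable (M \<Otimes>\<^sub>M M)"
    by (rule kernel_measurable[OF Q])
  define K where "K x y = ennreal (s Q x y) * ennreal (u x) * ennreal (v y)" for x y
  have "(\<integral>\<^sup>+y. (\<integral>\<^sup>+x\<in>Q. ennreal (s Q x y * u x) \<partial>M) * ennreal (v y) \<partial>M) = (\<integral>\<^sup>+y. \<integral>\<^sup>+x. K x y \<partial>M \<partial>M)"
  proof (intro nn_integral_cong)
    fix y assume y: "y \<in> space M"
    have [measurable]: "(\<lambda>x. s Q x y) \<in> borel_measurable M" by (rule kernel_measurable_x[OF Q y])
    have "(\<integral>\<^sup>+x. ennreal (s Q x y) * ennreal (u x) \<partial>M) * ennreal (v y) = (\<integral>\<^sup>+x. K x y \<partial>M)"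
      unfolding K_def by (intro nn_integral_multc[symmetric]) measurable
    then show "(\<integral>\<^sup>+x\<in>Q. ennreal (s Q x y * u x) \<partial>M) * ennreal (v y) = (\<integral>\<^sup>+x. K x y \<partial>M)"
      by (simp only: kernel_set_integral(1)[OF Q u0])
  qed
  also have "\<dots> = (\<integral>\<^sup>+x. \<integral>\<^sup>+y. K x y \<partial>M \<partial>M)"
  proof (rule Fubini')
    have "case_prod K = (\<lambda>z. ennreal (s Q (fst z) (snd z)) * ennreal (u (fst z)) * ennreal (v (snd z)))"
      by (auto simp: K_def)
    also have "\<dots> \<in> borel_measurable (M \<Otimes>\<^sub>M M)" by measurable
    finally show "case_prod K \<in> borel_measurable (M \<Otimes>\<^sub>M M)" .
  qed
  also have "\<dots> = (\<integral>\<^sup>+x. ennreal (u x) * (\<integral>\<^sup>+y\<in>Q. ennreal (s Q x y * v y) \<partial>M) \<partial>M)"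
  proof (intro nn_integral_cong)
    fix x assume x: "x \<in> space M"
    have [measurable]: "(\<lambda>y. s Q x y) \<in> borel_measurable M" by (rule kernel_measurable_y[OF Q x])
    have "(\<integral>\<^sup>+y. K x y \<partial>M) = (\<integral>\<^sup>+y. ennreal (u x) * (ennreal (s Q x y) * ennreal (v y)) \<partial>M)"
      by (intro nn_integral_cong) (simp add: K_def ac_simps)
    also have "\<dots> = ennreal (u x) * (\<integral>\<^sup>+y. ennreal (s Q x y) * ennreal (v y) \<partial>M)"
      by (intro nn_integral_cmult) measurable
    also have "(\<integral>\<^sup>+y. ennreal (s Q x y) * ennreal (v y) \<partial>M) = (\<integral>\<^sup>+y\<in>Q. ennreal (s Q x y * v y) \<partial>M)"
      by (rule kernel_set_integral(2)[OF Q v0, symmetric])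
    finally show "(\<integral>\<^sup>+y. K x y \<partial>M) = ennreal (u x) * (\<integral>\<^sup>+y\<in>Q. ennreal (s Q x y * v y) \<partial>M)" .
  qed
  finally show ?thesis .
qed

lemma Sadj_Spos_duality:
  assumes um[measurable]: "u \<in> borel_measurable M" and vm[measurable]: "v \<in> borel_measurable M"
    and u0: "\<And>x. x \<in> space M \<Longrightarrow> 0 \<le> u x" and v0: "\<And>y. y \<in> space M \<Longrightarrow> 0 \<le> v y"
  shows "(\<integral>\<^sup>+y. Sadj d s u y * ennreal (v y) \<partial>M) = (\<integral>\<^sup>+x. ennreal (u x) * Spos d s v x \<partial>M)"
proof -
  define A where "A Q y = (\<integral>\<^sup>+x\<in>Q. ennreal (s Q x y * u x) \<partial>M)" for Q y
  define B where "B Q x = (\<integral>\<^sup>+y\<in>Q. ennreal (s Q x y * v y) \<partial>M)" for Q x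
  define c where "c Q = inverse (ennreal (vol d Q))" for Q
  have [measurable]: "A Q \<in> borel_measurable M" "B Q \<in> borel_measurable M" if "Q \<in> dyadic d" for Q
    unfolding A_def[abs_def] B_def[abs_def] using kernel_integral_measurable[OF that] um vm by auto
  have "Sadj d s u y * ennreal (v y) = (\<Sum>\<^sub>\<infinity>Q\<in>dyadic d. c Q * (A Q y * ennreal (v y)))" for y
    unfolding Sadj_def A_def[symmetric] divide_ennreal_def c_def[symmetric]
    by (subst infsum_multc_ennreal[OF countable_dyadic, symmetric]) (simp add: ac_simps)
  then have "(\<integral>\<^sup>+y. Sadj d s u y * ennreal (v y) \<partial>M) = (\<integral>\<^sup>+y. (\<Sum>\<^sub>\<infinity>Q\<in>dyadic d. c Q * (A Q y * ennreal (v y))) \<partial>M)"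
    by simp
  also have "\<dots> = (\<Sum>\<^sub>\<infinity>Q\<in>dyadic d. \<integral>\<^sup>+y. c Q * (A Q y * ennreal (v y)) \<partial>M)"
    by (intro nn_integral_infsum[OF countable_dyadic]) measurable
  also have "\<dots> = (\<Sum>\<^sub>\<infinity>Q\<in>dyadic d. \<integral>\<^sup>+x. c Q * (ennreal (u x) * B Q x) \<partial>M)"
  proof (intro infsum_cong)
    fix Q assume Q[measurable]: "Q \<in> dyadic d"
    have "(\<integral>\<^sup>+y. c Q * (A Q y * ennreal (v y)) \<partial>M) = c Q * (\<integral>\<^sup>+y. A Q y * ennreal (v y) \<partial>M)"
      by (intro nn_integral_cmult) measurable
    also have "(\<integral>\<^sup>+y. A Q y * ennreal (v y) \<partial>M) = (\<integral>\<^sup>+x. ennreal (u x) * B Q x \<partial>M)"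
      unfolding A_def B_def by (rule cube_duality[OF Q um vm u0 v0])
    also have "c Q * \<dots> = (\<integral>\<^sup>+x. c Q * (ennreal (u x) * B Q x) \<partial>M)"
      by (intro nn_integral_cmult[symmetric]) measurable
    finally show "(\<integral>\<^sup>+y. c Q * (A Q y * ennreal (v y)) \<partial>M) = (\<integral>\<^sup>+x. c Q * (ennreal (u x) * B Q x) \<partial>M)" .
  qed
  also have "\<dots> = (\<integral>\<^sup>+x. (\<Sum>\<^sub>\<infinity>Q\<in>dyadic d. c Q * (ennreal (u x) * B Q x)) \<partial>M)"
    by (intro nn_integral_infsum[OF countable_dyadic, symmetric]) measurable
  also have "\<dots> = (\<integral>\<^sup>+x. ennreal (u x) * Spos d s v x \<partial>M)"
  proof -
    have "ennreal (u x) * Spos d s v x = (\<Sum>\<^sub>\<infinity>Q\<in>dyadic d. c Q * (ennreal (u x) * B Q x))" for x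
      unfolding Spos_def B_def[symmetric] divide_ennreal_def c_def[symmetric]
      by (subst infsum_cmult_ennreal[OF countable_dyadic, symmetric]) (simp add: ac_simps)
    then show ?thesis by simp
  qed
  finally show ?thesis .
qed

section \<open>Domination of the linearised adjoint\<close>

text \<open>Pointwise bound for the integrand of one cube's contribution to L*: the truncation
  indicator and the phase have modulus at most 1 and s_Q' is nonnegative.\<close>
lemma Lstar_integrand_bound:
  assumes Q': "Q' \<in> dyadic d" and u0: "0 \<le> u x" and dom: "cmod (\<phi> x) \<le> G * u x" and G: "0 \<le> G"
  shows "ennreal (cmod (indicator Q' x *\<^sub>R (complex_of_real (s Q' x y * indicator T x)
      * exp (- \<i> * complex_of_real (\<theta> x)) * \<phi> x)))
    \<le> ennreal G * (ennreal (s Q' x y * u x) * indicator Q' x)"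
proof -
  have s0: "0 \<le> s Q' x y" by (rule kernel_nonneg[OF Q'])
  have "cmod (indicator Q' x *\<^sub>R (complex_of_real (s Q' x y * indicator T x) * exp (- \<i> * complex_of_real (\<theta> x)) * \<phi> x))
      = indicator Q' x * (s Q' x y * indicator T x) * cmod (\<phi> x)"
    using s0 by (simp add: norm_mult norm_exp_eq_Re abs_mult split: split_indicator)
  also have "\<dots> \<le> indicator Q' x * s Q' x y * (G * u x)"
    using s0 dom G u0 by (auto simp: indicator_def intro!: mult_left_mono)
  also have "\<dots> = G * (s Q' x y * u x) * indicator Q' x" by (simp only: ac_simps)
  finally have "ennreal (cmod (indicator Q' x *\<^sub>R (complex_of_real (s Q' x y * indicator T x)
      * exp (- \<i> * complex_of_real (\<theta> x)) * \<phi> x))) \<le> ennreal (G * (s Q' x y * u x) * indicator Q' x)"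
    by (rule ennreal_leI)
  also have "\<dots> = ennreal G * (ennreal (s Q' x y * u x) * indicator Q' x)"
    using G s0 u0 by (simp add: ennreal_mult indicator_def)
  finally show ?thesis .
qed

lemma Lstar_term_bound:
  assumes Q': "Q' \<in> dyadic d" and y: "y \<in> space M"
    and um[measurable]: "u \<in> borel_measurable M" and u0: "\<And>x. x \<in> space M \<Longrightarrow> 0 \<le> u x"
    and dom: "\<And>x. x \<in> space M \<Longrightarrow> cmod (\<phi> x) \<le> G * u x" and G: "0 \<le> G"
  shows "ennreal (cmod (complex_of_real (1 / vol d Q') * (LINT x:Q'|M.
            complex_of_real (s Q' x y * indicator T x) * exp (- \<i> * complex_of_real (\<theta> x)) * \<phi> x)))
    \<le> ennreal G * ((\<integral>\<^sup>+x\<in>Q'. ennreal (s Q' x y * u x) \<partial>M) / ennreal (vol d Q'))"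
proof -
  define I where "I = (LINT x:Q'|M. complex_of_real (s Q' x y * indicator T x) * exp (- \<i> * complex_of_real (\<theta> x)) * \<phi> x)"
  define J where "J = (\<integral>\<^sup>+x\<in>Q'. ennreal (s Q' x y * u x) \<partial>M)"
  have [measurable]: "(\<lambda>x. s Q' x y) \<in> borel_measurable M" by (rule kernel_measurable_x[OF Q' y])
  have [measurable]: "Q' \<in> sets M" using Q' dyadic_sets by auto
  have "ennreal (cmod I) \<le> (\<integral>\<^sup>+x. ennreal (cmod (indicator Q' x *\<^sub>R (complex_of_real (s Q' x y * indicator T x)
      * exp (- \<i> * complex_of_real (\<theta> x)) * \<phi> x))) \<partial>M)"
    unfolding I_def by (rule norm_set_integral_le_nn_integral)
  also have "\<dots> \<le> (\<integral>\<^sup>+x. ennreal G * (ennreal (s Q' x y * u x) * indicator Q' x) \<partial>M)"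
    using u0 dom G by (intro nn_integral_mono Lstar_integrand_bound[OF Q']) auto
  also have "\<dots> = ennreal G * J" unfolding J_def by (rule nn_integral_cmult) measurable
  finally have IJ: "ennreal (cmod I) \<le> ennreal G * J" .
  show ?thesis
  proof (cases "vol d Q' = 0")
    case True then show ?thesis by simp
  next
    case False
    then have vp: "0 < vol d Q'" unfolding vol_def using measure_nonneg[of M Q'] by linarith
    have "ennreal (cmod (complex_of_real (1 / vol d Q') * I)) = ennreal (cmod I) / ennreal (vol d Q')"
      using vp by (simp add: norm_mult norm_divide divide_ennreal)
    also have "\<dots> \<le> (ennreal G * J) / ennreal (vol d Q')" by (rule divide_right_mono_ennreal[OF IJ])
    also have "\<dots> = ennreal G * (J / ennreal (vol d Q'))" by (simp add: ennreal_times_divide)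
    finally show ?thesis unfolding I_def J_def .
  qed
qed

lemma Lstar_le_Sadj:
  assumes y: "y \<in> space M" and um: "u \<in> borel_measurable M" and u0: "\<And>x. x \<in> space M \<Longrightarrow> 0 \<le> u x"
    and dom: "\<And>x. x \<in> space M \<Longrightarrow> cmod (\<phi> x) \<le> G * u x" and G: "0 \<le> G"
  shows "ennreal (cmod (Lstar d s \<theta> \<epsilon> \<upsilon> \<phi> y)) \<le> ennreal G * Sadj d s u y"
proof -
  define c where "c Q' = complex_of_real (1 / vol d Q') * (LINT x:Q'|M.
      complex_of_real (s Q' x y * indicator {z. \<epsilon> z \<le> dlen d Q' \<and> dlen d Q' \<le> \<upsilon> z} x)
      * exp (- \<i> * complex_of_real (\<theta> x)) * \<phi> x)" for Q'
  have "ennreal (cmod (Lstar d s \<theta> \<epsilon> \<upsilon> \<phi> y)) = ennreal (cmod (infsum c (dyadic d)))"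
    unfolding Lstar_def c_def ..
  also have "\<dots> \<le> infsum (\<lambda>Q'. ennreal (cmod (c Q'))) (dyadic d)"
    by (rule norm_infsum_ennreal)
  also have "\<dots> \<le> infsum (\<lambda>Q'. ennreal G * ((\<integral>\<^sup>+x\<in>Q'. ennreal (s Q' x y * u x) \<partial>M) / ennreal (vol d Q'))) (dyadic d)"
    unfolding c_def by (intro infsum_mono_ennreal Lstar_term_bound[OF _ y um u0 dom G])
  also have "\<dots> = ennreal G * Sadj d s u y"
    unfolding Sadj_def by (rule infsum_cmult_ennreal[OF countable_dyadic])
  finally show ?thesis .
qed

lemma Lstar_cube_integral:
  assumes Q: "Q \<in> dyadic d" and Q0: "Q0 \<in> dyadic d" and QQ0: "Q \<subseteq> Q0"
    and wm[measurable]: "w \<in> borel_measurable M" and w0: "\<And>x. x \<in> space M \<Longrightarrow> 0 \<le> w x"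
    and sm[measurable]: "\<sigma> \<in> borel_measurable M" and s0: "\<And>x. x \<in> space M \<Longrightarrow> 0 \<le> \<sigma> x"
    and gb: "\<And>z. z \<in> space M \<Longrightarrow> cmod (g z) \<le> G" and G: "0 \<le> G"
  shows "(\<integral>\<^sup>+y\<in>Q. ennreal (cmod (Lstar d s \<theta> \<epsilon> \<upsilon> (\<lambda>z. indicator Q z * g z * complex_of_real (w z)) y)) * ennreal (\<sigma> y) \<partial>M)
     \<le> ennreal G * (\<integral>\<^sup>+x\<in>Q. Spos d s (\<lambda>y. indicator Q0 y * \<sigma> y) x * ennreal (w x) \<partial>M)"
proof -
  have [measurable]: "Q \<in> sets M" "Q0 \<in> sets M" using Q Q0 dyadic_sets by auto
  define u where "u x = indicator Q x * w x" for x
  define v where "v y = indicator Q y * \<sigma> y" for y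
  have [measurable]: "u \<in> borel_measurable M" "v \<in> borel_measurable M"
    unfolding u_def[abs_def] v_def[abs_def] by measurable
  have u0: "0 \<le> u x" and v0: "0 \<le> v x" if "x \<in> space M" for x
    unfolding u_def v_def using w0[OF that] s0[OF that] by auto
  have dom: "cmod (indicator Q x * g x * complex_of_real (w x)) \<le> G * u x" if "x \<in> space M" for x
    unfolding u_def using gb[OF that] w0[OF that]
    by (auto simp: norm_mult indicator_def intro: mult_right_mono)
  have [measurable]: "Sadj d s u \<in> borel_measurable M" by (rule Sadj_measurable) measurable
  have "(\<integral>\<^sup>+y\<in>Q. ennreal (cmod (Lstar d s \<theta> \<epsilon> \<upsilon> (\<lambda>z. indicator Q z * g z * complex_of_real (w z)) y)) * ennreal (\<sigma> y) \<partial>M)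
     \<le> (\<integral>\<^sup>+y. ennreal G * (Sadj d s u y * ennreal (v y)) \<partial>M)"
  proof (rule nn_integral_mono)
    fix y assume y: "y \<in> space M"
    let ?L = "ennreal (cmod (Lstar d s \<theta> \<epsilon> \<upsilon> (\<lambda>z. indicator Q z * g z * complex_of_real (w z)) y))"
    have L: "?L \<le> ennreal G * Sadj d s u y"
      by (rule Lstar_le_Sadj[OF y _ u0 dom G]) simp_all
    have "?L * ennreal (\<sigma> y) * indicator Q y = ?L * ennreal (v y)"
      unfolding v_def by (simp add: indicator_def)
    also have "\<dots> \<le> ennreal G * Sadj d s u y * ennreal (v y)" by (rule mult_right_mono[OF L]) simp
    finally show "?L * ennreal (\<sigma> y) * indicator Q y \<le> ennreal G * (Sadj d s u y * ennreal (v y))"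
      by (simp only: mult.assoc)
  qed
  also have "\<dots> = ennreal G * (\<integral>\<^sup>+y. Sadj d s u y * ennreal (v y) \<partial>M)"
    by (rule nn_integral_cmult) measurable
  also have "(\<integral>\<^sup>+y. Sadj d s u y * ennreal (v y) \<partial>M) = (\<integral>\<^sup>+x. ennreal (u x) * Spos d s v x \<partial>M)"
    by (rule Sadj_Spos_duality) (simp_all add: u0 v0)
  also have "\<dots> \<le> (\<integral>\<^sup>+x. ennreal (u x) * Spos d s (\<lambda>y. indicator Q0 y * \<sigma> y) x \<partial>M)"
    using QQ0 s0 by (intro nn_integral_mono mult_left_mono Spos_mono) (auto simp: v_def indicator_def)
  also have "\<dots> = (\<integral>\<^sup>+x\<in>Q. Spos d s (\<lambda>y. indicator Q0 y * \<sigma> y) x * ennreal (w x) \<partial>M)"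
    by (intro nn_integral_cong) (simp add: u_def indicator_def mult.commute)
  finally show ?thesis by (simp add: mult_left_mono)
qed

end

section \<open>The estimate for a fixed testing constant\<close>

lemma weight_measurable: "weight d v \<Longrightarrow> v \<in> borel_measurable (RdM d)"
  unfolding weight_def by auto

lemma weight_nonneg: "weight d v \<Longrightarrow> x \<in> space (RdM d) \<Longrightarrow> 0 \<le> v x"
  unfolding weight_def by auto

lemma weight_wmass_finite:
  assumes "weight d v" "Q \<in> dyadic d"
  shows "wmass (RdM d) v Q < \<infinity>"
proof -
  have "integrable (RdM d) (\<lambda>x. indicator Q x *\<^sub>R v x)"
    using assms unfolding weight_def set_integrable_def by auto
  then have "(\<integral>\<^sup>+ x. ennreal (indicator Q x *\<^sub>R v x) \<partial>RdM d) \<noteq> \<infinity>" by (rule integrableD)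
  moreover have "(\<integral>\<^sup>+ x. ennreal (indicator Q x *\<^sub>R v x) \<partial>RdM d) = wmass (RdM d) v Q"
    unfolding wmass_def by (intro nn_integral_cong) (auto simp: indicator_def)
  ultimately show ?thesis by (simp add: less_top)
qed

lemma dyadic_nested_family:
  assumes d: "1 \<le> d" and w: "weight d w" and Q0: "Q0 \<in> dyadic d"
  shows "nested_family (RdM d) w {Q\<in>dyadic d. Q \<subseteq> Q0} Q0"
proof (rule nested_family.intro)
  show "sigma_finite_measure (RdM d)" by (rule sigma_finite_RdM)
  show "countable {Q\<in>dyadic d. Q \<subseteq> Q0}" using countable_dyadic by (rule countable_subset[rotated]) auto
  show "Q \<in> sets (RdM d)" if "Q \<in> {Q\<in>dyadic d. Q \<subseteq> Q0}" for Q using that dyadic_sets by auto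
  show "w \<in> borel_measurable (RdM d)" by (rule weight_measurable[OF w])
  show "Q1 \<subseteq> Q2 \<or> Q2 \<subseteq> Q1" if "Q1 \<in> {Q\<in>dyadic d. Q \<subseteq> Q0}" "Q2 \<in> {Q\<in>dyadic d. Q \<subseteq> Q0}" "Q1 \<inter> Q2 \<noteq> {}"
    for Q1 Q2 using that dyadic_nest by auto
  show "finite {Q' \<in> {Q\<in>dyadic d. Q \<subseteq> Q0}. Q \<subseteq> Q'}" if "Q \<in> {Q\<in>dyadic d. Q \<subseteq> Q0}" for Q
  proof -
    have "finite {Q'\<in>dyadic d. Q \<subseteq> Q' \<and> Q' \<subseteq> Q0}" using ancestors_finite[OF d _ Q0, of Q] that by simp
    then show ?thesis by (rule finite_subset[rotated]) auto
  qed
  show "Q0 \<in> sets (RdM d)" using Q0 dyadic_sets by auto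
  show "Q \<subseteq> Q0" if "Q \<in> {Q\<in>dyadic d. Q \<subseteq> Q0}" for Q using that by auto
  show "wmass (RdM d) w Q0 < \<infinity>" by (rule weight_wmass_finite[OF w Q0])
qed

context positive_shift
begin

lemma Lmax_le_wmax:
  assumes Q0: "Q0 \<in> dyadic d" and w: "weight d w" and \<sigma>: "weight d \<sigma>"
    and gb: "\<And>z. z \<in> space M \<Longrightarrow> cmod (g z) \<le> G" and G: "0 \<le> G"
  shows "Lmax d w \<sigma> s \<theta> \<epsilon> \<upsilon> g Q0 x
    \<le> ennreal G * wmax M w (Spos d s (\<lambda>y. indicator Q0 y * \<sigma> y)) {Q\<in>dyadic d. Q \<subseteq> Q0} x"
proof -
  define F where "F = Spos d s (\<lambda>y. indicator Q0 y * \<sigma> y)"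
  have "Lmax d w \<sigma> s \<theta> \<epsilon> \<upsilon> g Q0 x \<le> (SUP Q\<in>{Q\<in>dyadic d. Q \<subseteq> Q0}. ennreal G * (indicator Q x * wavg M w F Q))"
    unfolding Lmax_def
  proof (rule SUP_mono)
    fix Q assume "Q \<in> {Q\<in>dyadic d. Q \<subseteq> Q0}"
    then have Q: "Q \<in> dyadic d" and QQ0: "Q \<subseteq> Q0" by auto
    define I where "I = (\<integral>\<^sup>+y\<in>Q. ennreal (cmod (Lstar d s \<theta> \<epsilon> \<upsilon> (\<lambda>z. indicator Q z * g z * complex_of_real (w z)) y)) * ennreal (\<sigma> y) \<partial>M)"
    have I: "I \<le> ennreal G * wint M w F Q"
      unfolding I_def wint_def F_def
      by (rule Lstar_cube_integral[OF Q Q0 QQ0 weight_measurable[OF w] weight_nonneg[OF w]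
            weight_measurable[OF \<sigma>] weight_nonneg[OF \<sigma>] gb G])
    have "indicator Q x * (if wmeas d w Q = 0 then 0 else I / wmeas d w Q)
      \<le> ennreal G * (indicator Q x * wavg M w F Q)"
    proof (cases "wmass M w Q = 0")
      case True then show ?thesis by (simp add: wmeas_def wmass_def[symmetric])
    next
      case False
      have "indicator Q x * (I / wmass M w Q) \<le> indicator Q x * (ennreal G * wint M w F Q / wmass M w Q)"
        by (intro mult_left_mono divide_right_mono_ennreal I) simp
      also have "\<dots> = ennreal G * (indicator Q x * (wint M w F Q / wmass M w Q))"
        by (simp add: ennreal_times_divide ac_simps)
      finally show ?thesis using False by (simp add: wmeas_def wmass_def[symmetric] wavg_def)
    qed
    then show "\<exists>Q'\<in>{Q\<in>dyadic d. Q \<subseteq> Q0}. indicator Q x * (if wmeas d w Q = 0 then 0 else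
        (\<integral>\<^sup>+y\<in>Q. ennreal (cmod (Lstar d s \<theta> \<epsilon> \<upsilon> (\<lambda>z. indicator Q z * g z * complex_of_real (w z)) y)) * ennreal (\<sigma> y) \<partial>M) / wmeas d w Q)
      \<le> ennreal G * (indicator Q' x * wavg M w F Q')"
      using Q QQ0 unfolding I_def by blast
  qed
  also have "\<dots> = ennreal G * wmax M w F {Q\<in>dyadic d. Q \<subseteq> Q0} x"
    unfolding wmax_def by (simp add: SUP_mult_left_ennreal)
  finally show ?thesis unfolding F_def .
qed

lemma Lmax_moment_bound:
  assumes p: "1 < p" and d: "1 \<le> d" and w: "weight d w" and \<sigma>: "weight d \<sigma>" and Q0: "Q0 \<in> dyadic d"
    and gb: "\<And>z. z \<in> space M \<Longrightarrow> cmod (g z) \<le> G" and G: "0 \<le> G"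
  shows "(\<integral>\<^sup>+x\<in>Q0. epowr (Lmax d w \<sigma> s \<theta> \<epsilon> \<upsilon> g Q0 x) p * ennreal (w x) \<partial>M)
    \<le> ennreal (G powr p) * (ennreal (doob_const p)
        * (\<integral>\<^sup>+x\<in>Q0. epowr (Spos d s (\<lambda>y. indicator Q0 y * \<sigma> y) x) p * ennreal (w x) \<partial>M))"
proof -
  define F where "F = Spos d s (\<lambda>y. indicator Q0 y * \<sigma> y)"
  define Qs where "Qs = {Q\<in>dyadic d. Q \<subseteq> Q0}"
  interpret nested_family M w Qs Q0 unfolding Qs_def by (rule dyadic_nested_family[OF d w Q0])
  have Fm[measurable]: "F \<in> borel_measurable M"
    unfolding F_def using weight_measurable[OF \<sigma>] dyadic_sets[OF Q0] by (intro Spos_measurable) measurable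
  have [measurable]: "Q0 \<in> sets M" using dyadic_sets[OF Q0] .
  have pointwise: "epowr (Lmax d w \<sigma> s \<theta> \<epsilon> \<upsilon> g Q0 x) p * ennreal (w x) * indicator Q0 x
      \<le> ennreal (G powr p) * (epowr (wmax M w F Qs x) p * ennreal (w x) * indicator Q0 x)" for x
  proof -
    have "epowr (Lmax d w \<sigma> s \<theta> \<epsilon> \<upsilon> g Q0 x) p \<le> epowr (ennreal G * wmax M w F Qs x) p"
      unfolding F_def Qs_def using p by (intro epowr_mono Lmax_le_wmax[OF Q0 w \<sigma> gb G]) auto
    also have "\<dots> = ennreal (G powr p) * epowr (wmax M w F Qs x) p"
      using G p by (simp add: epowr_mult epowr_ennreal)
    finally have "epowr (Lmax d w \<sigma> s \<theta> \<epsilon> \<upsilon> g Q0 x) p * (ennreal (w x) * indicator Q0 x)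
      \<le> ennreal (G powr p) * epowr (wmax M w F Qs x) p * (ennreal (w x) * indicator Q0 x)"
      by (rule mult_right_mono) simp
    then show ?thesis by (simp only: mult.assoc)
  qed
  have "(\<integral>\<^sup>+x\<in>Q0. epowr (Lmax d w \<sigma> s \<theta> \<epsilon> \<upsilon> g Q0 x) p * ennreal (w x) \<partial>M)
     \<le> ennreal (G powr p) * (\<integral>\<^sup>+x\<in>Q0. epowr (wmax M w F Qs x) p * ennreal (w x) \<partial>M)"
    using pointwise by (subst nn_integral_cmult[symmetric]) (measurable, intro nn_integral_mono, simp)
  also have "\<dots> \<le> ennreal (G powr p) * (ennreal (doob_const p) * (\<integral>\<^sup>+x\<in>Q0. epowr (F x) p * ennreal (w x) \<partial>M))"
    by (intro mult_left_mono doob[OF p Fm]) simp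
  finally show ?thesis unfolding F_def .
qed

lemma maximal_estimate:
  assumes p: "1 < p" and d: "1 \<le> d" and w: "weight d w" and \<sigma>: "weight d \<sigma>"
    and testing: "\<forall>Q\<in>dyadic d. epowr (\<integral>\<^sup>+x\<in>Q. epowr (Spos d s (\<lambda>y. indicator Q y * \<sigma> y) x) p * ennreal (w x) \<partial>M) (1 / p)
        \<le> A * epowr (wmeas d \<sigma> Q) (1 / p)"
    and Q0: "Q0 \<in> dyadic d" and gbd: "bounded (g ` space M)"
  shows "epowr (\<integral>\<^sup>+x\<in>Q0. epowr (Lmax d w \<sigma> s \<theta> \<epsilon> \<upsilon> g Q0 x) p * ennreal (w x) \<partial>M) (1 / p)
    \<le> ennreal (doob_const p powr (1 / p)) * A * epowr (wmeas d \<sigma> Q0) (1 / p) * ennreal (SUP z\<in>space M. cmod (g z))"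
proof -
  define G where "G = (SUP z\<in>space M. cmod (g z))"
  define T where "T = (\<integral>\<^sup>+x\<in>Q0. epowr (Spos d s (\<lambda>y. indicator Q0 y * \<sigma> y) x) p * ennreal (w x) \<partial>M)"
  have p0: "0 < p" using p by simp
  have D0: "0 \<le> doob_const p" unfolding doob_const_def using young_const_nonneg[OF p] by simp
  have gb: "cmod (g z) \<le> G" if "z \<in> space M" for z
    unfolding G_def using gbd that by (intro cSUP_upper bounded_imp_bdd_above) (auto simp: bounded_norm_comp)
  have G0: "0 \<le> G"
  proof -
    have "space M \<noteq> {}" unfolding space_RdM by (simp add: PiE_eq_empty_iff)
    then obtain z where "z \<in> space M" by blast
    then show ?thesis using gb norm_ge_zero order_trans by blast
  qed
  have "epowr (\<integral>\<^sup>+x\<in>Q0. epowr (Lmax d w \<sigma> s \<theta> \<epsilon> \<upsilon> g Q0 x) p * ennreal (w x) \<partial>M) (1 / p)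
     \<le> epowr (ennreal (G powr p) * (ennreal (doob_const p) * T)) (1 / p)"
    unfolding T_def using p0 by (intro epowr_mono Lmax_moment_bound[OF p d w \<sigma> Q0 gb G0]) auto
  also have "\<dots> = ennreal G * ennreal (doob_const p powr (1 / p)) * epowr T (1 / p)"
  proof -
    have "(G powr p) powr (1 / p) = G" using G0 p0 by (simp add: powr_powr)
    then show ?thesis using p0 G0 D0 by (simp add: epowr_mult epowr_ennreal mult.assoc)
  qed
  also have "\<dots> \<le> ennreal G * ennreal (doob_const p powr (1 / p)) * (A * epowr (wmeas d \<sigma> Q0) (1 / p))"
    using testing Q0 unfolding T_def by (intro mult_left_mono) auto
  finally show ?thesis unfolding G_def by (simp add: ac_simps)
qed

end

lemma Inf_le_cmult_Inf:
  fixes S T :: "ennreal set" and c :: real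
  assumes c: "0 < c" and mem: "\<And>A. A \<in> T \<Longrightarrow> ennreal c * A \<in> S"
  shows "Inf S \<le> ennreal c * Inf T"
proof -
  have inv: "ennreal (1 / c) * (ennreal c * A) = A" for A
    using c by (simp add: mult.assoc[symmetric] ennreal_mult[symmetric])
  have "ennreal (1 / c) * Inf S \<le> Inf T"
  proof (rule Inf_greatest)
    fix A assume "A \<in> T"
    then have "Inf S \<le> ennreal c * A" by (intro Inf_lower mem)
    then have "ennreal (1 / c) * Inf S \<le> ennreal (1 / c) * (ennreal c * A)" by (rule mult_left_mono) simp
    then show "ennreal (1 / c) * Inf S \<le> A" unfolding inv .
  qed
  then have "ennreal c * (ennreal (1 / c) * Inf S) \<le> ennreal c * Inf T" by (rule mult_left_mono) simp
  moreover have "ennreal c * (ennreal (1 / c) * Inf S) = Inf S"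
    using c by (simp add: mult.assoc[symmetric] ennreal_mult[symmetric])
  ultimately show ?thesis by simp
qed

theorem lemma3p3:
  fixes p :: real
  assumes "1 < p"
  shows "\<exists>C>0. \<forall>d \<ge> 1. \<forall>w \<sigma> m n h k.
           weight d w \<and> weight d \<sigma> \<and> pos_haar_shift d m n h k \<longrightarrow>
           max_const d p w \<sigma> (skernel d m n h k) \<le> ennreal C * test_const d p w \<sigma> (skernel d m n h k)"
proof -
  define C where "C = doob_const p powr (1 / p)"
  have C: "0 < C" unfolding C_def doob_const_def young_const_def using assms by simp
  have "max_const d p w \<sigma> (skernel d m n h k) \<le> ennreal C * test_const d p w \<sigma> (skernel d m n h k)"
    if d: "1 \<le> d" and w: "weight d w" and \<sigma>: "weight d \<sigma>" and shift: "pos_haar_shift d m n h k"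
    for d w \<sigma> m n h k
  proof -
    interpret positive_shift d m n h k using shift by unfold_locales
    show ?thesis unfolding max_const_def test_const_def
      by (rule Inf_le_cmult_Inf[OF C])
        (auto simp: C_def intro!: maximal_estimate[OF assms d w \<sigma>])
  qed
  with C show ?thesis by blast
qed

end
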